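(* Let $\mathbb{F}$ be a field, $d\geq3$ and $V$ a vector space over $\mathbb{F}$ of dimension $d+1$. Let $E^*_0,\dots,E^*_d$ be a system of mutually orthogonal idempotents in $\mathrm{End}(V)$ and $A\in\mathrm{End}(V)$ with $E^*_iAE^*_j=0$ if $|i-j|>1$ and $E^*_iAE^*_j\neq0$ if $|i-j|=1$. Assume $A$ is multiplicity-free and bipartite with primitive idempotents $E_0,\dots,E_d$ and eigenvalues $\theta_0,\dots,\theta_d$. Let $\theta^*_0,\dots,\theta^*_d\in\mathbb{F}$ be mutually distinct and $A^*=\sum_i\theta^*_iE^*_i$. Assume $E_0$ is normalizing and that in $\Delta$ the vertex $E_0$ is adjacent to $E_1$ and no other vertex. Then for $1\le i\le d-1$, $$\theta_0\frac{\theta^*_{i-1}-\theta^*_1}{\theta^*_i-\theta^*_0}\neq\theta_1\qquad\text{and}\qquad\theta_0\frac{\theta^*_{i+1}-\theta^*_1}{\theta^*_i-\theta^*_0}\neq\theta_1.$$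
   Context: A system of mutually orthogonal idempotents: $E^*_iE^*_j=\delta_{ij}E^*_i$, $\operatorname{rank}E^*_i=1$. $A$ multiplicity-free: $d+1$ distinct eigenvalues in $\mathbb{F}$; $E_i$ is the projection onto the $\theta_i$-eigenspace along the other eigenspaces. Bipartite: $\operatorname{tr}(E^*_iA)=0$ for all $i$. $\Delta$: graph on $E_0,\dots,E_d$ with $E_i\neq E_j$ adjacent iff $E_iA^*E_j\neq0$. The matrix $Y$ representing $A$ w.r.t. a basis $v_0,\dots,v_d$ satisfies $Av_j=\sum_iY_{ij}v_i$. An eigenvalue $\theta$ is normalizing if some basis with $v_i\in E^*_iV$ makes every row sum of the matrix representing $A$ equal to $\theta$; $E_i$ is normalizing if $\theta_i$ is. *)

theory Defs
  imports "Jordan_Normal_Form.DL_Rank" "Jordan_Normal_Form.Char_Poly"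
begin

text \<open>Linear algebra on V = F^(d+1); End(V) is represented by (d+1) x (d+1) matrices.\<close>

definition mtrace :: "'a::comm_ring_1 mat \<Rightarrow> 'a" where
  "mtrace M = (\<Sum>i<dim_row M. M $$ (i, i))"

definition msum :: "nat \<Rightarrow> ('i \<Rightarrow> 'a::comm_ring_1 mat) \<Rightarrow> 'i set \<Rightarrow> 'a mat" where
  "msum n f I = mat n n (\<lambda>(r, c). \<Sum>i\<in>I. f i $$ (r, c))"

definition orth_idem_system :: "nat \<Rightarrow> (nat \<Rightarrow> 'a::field mat) \<Rightarrow> bool" where
  "orth_idem_system d Es \<longleftrightarrow>
     (\<forall>i\<le>d. Es i \<in> carrier_mat (d+1) (d+1) \<and> vec_space.rank (d+1) (Es i) = 1) \<and>
     (\<forall>i\<le>d. \<forall>j\<le>d. Es i * Es j = (if i = j then Es i else 0\<^sub>m (d+1) (d+1)))"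

definition eigenspace_of :: "'a::field mat \<Rightarrow> 'a \<Rightarrow> 'a vec set" where
  "eigenspace_of A t = {v \<in> carrier_vec (dim_row A). A *\<^sub>v v = t \<cdot>\<^sub>v v}"

definition eigenspace_sum :: "'a::field mat \<Rightarrow> (nat \<Rightarrow> 'a) \<Rightarrow> nat set \<Rightarrow> 'a vec set" where
  "eigenspace_sum A th J =
     {finsum_vec TYPE('a) (dim_row A) w J | w. \<forall>j\<in>J. w j \<in> eigenspace_of A (th j)}"

text \<open>A is multiplicity-free with eigenvalues theta_0..theta_d (distinct, in F), and E_i is the
  projection onto the theta_i-eigenspace along the other eigenspaces.\<close>
definition mult_free_with :: "nat \<Rightarrow> 'a::field mat \<Rightarrow> (nat \<Rightarrow> 'a) \<Rightarrow> (nat \<Rightarrow> 'a mat) \<Rightarrow> bool" where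
  "mult_free_with d A th E \<longleftrightarrow>
     inj_on th {0..d} \<and> (\<forall>i\<le>d. eigenvalue A (th i)) \<and>
     (\<forall>i\<le>d. E i \<in> carrier_mat (d+1) (d+1) \<and>
        (\<forall>v\<in>carrier_vec (d+1). E i *\<^sub>v v \<in> eigenspace_of A (th i) \<and>
            v - E i *\<^sub>v v \<in> eigenspace_sum A th ({0..d} - {i})))"

definition bipartite_wrt :: "nat \<Rightarrow> (nat \<Rightarrow> 'a::field mat) \<Rightarrow> 'a mat \<Rightarrow> bool" where
  "bipartite_wrt d Es A \<longleftrightarrow> (\<forall>i\<le>d. mtrace (Es i * A) = 0)"

definition Delta_adj :: "nat \<Rightarrow> (nat \<Rightarrow> 'a::field mat) \<Rightarrow> 'a mat \<Rightarrow> nat \<Rightarrow> nat \<Rightarrow> bool" where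
  "Delta_adj d E As i j \<longleftrightarrow> E i \<noteq> E j \<and> E i * As * E j \<noteq> 0\<^sub>m (d+1) (d+1)"

definition normalizing :: "nat \<Rightarrow> (nat \<Rightarrow> 'a::field mat) \<Rightarrow> 'a mat \<Rightarrow> 'a \<Rightarrow> bool" where
  "normalizing d Es A t \<longleftrightarrow>
     (\<exists>v :: nat \<Rightarrow> 'a vec. \<exists>Y :: nat \<Rightarrow> nat \<Rightarrow> 'a.
        (\<forall>i\<le>d. v i \<in> carrier_vec (d+1) \<and> v i \<in> (\<lambda>x. Es i *\<^sub>v x) ` carrier_vec (d+1)) \<and>
        (\<forall>c :: nat \<Rightarrow> 'a. finsum_vec TYPE('a) (d+1) (\<lambda>i. c i \<cdot>\<^sub>v v i) {0..d} = 0\<^sub>v (d+1)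
            \<longrightarrow> (\<forall>i\<le>d. c i = 0)) \<and>
        (\<forall>j\<le>d. A *\<^sub>v v j = finsum_vec TYPE('a) (d+1) (\<lambda>i. Y i j \<cdot>\<^sub>v v i) {0..d}) \<and>
        (\<forall>i\<le>d. (\<Sum>j\<le>d. Y i j) = t))"

end

theory Submission
  imports Defs
begin

(*
  In the normalizing basis v_0, ..., v_d the matrix A becomes a tridiagonal matrix Y with zero
  diagonal, nonzero off-diagonal entries and all row sums equal to theta_0; E*_i becomes the i-th
  coordinate projection and A* becomes diag(theta*_0, ..., theta*_d).  Since A E_0 = theta_0 E_0
  and the theta_0-eigenvectors of such a Y are constant, all rows of the matrix F of E_0 coincide
  with one vector y, and E_0 A = theta_0 E_0 makes y a left theta_0-eigenvector of Y.  Because E_0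
  is adjacent in Delta only to E_1, the spectral decomposition A = sum_l theta_l E_l gives
  E_0 A* A = theta_1 E_0 A* + (theta_0 - theta_1) E_0 A* E_0, whose first row is a second,
  "twisted" three-term relation for y.  Eliminating between the two relations in column i gives
    (theta*_(i+1) - theta*_(i-1)) Y_(i+1,i) y_(i+1)
      = (theta_1 (theta*_i - theta*_0) - theta_0 (theta*_(i-1) - theta*_1)) y_i
  and the symmetric identity for y_(i-1).  The same relations show that y has no zero entry, so
  the coefficient on the right can vanish in neither case, which is the claim.
*)

section \<open>Tridiagonal matrices with zero diagonal\<close>

definition bipartite_tridiagonal :: "nat \<Rightarrow> (nat \<Rightarrow> nat \<Rightarrow> 'a::zero) \<Rightarrow> bool" where
  "bipartite_tridiagonal d Y \<longleftrightarrow> (\<forall>i\<le>d. \<forall>j\<le>d. Y i j \<noteq> 0 \<longleftrightarrow> i = j + 1 \<or> j = i + 1)"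

lemma bipartite_tridiagonal_transpose:
  "bipartite_tridiagonal d Y \<Longrightarrow> bipartite_tridiagonal d (\<lambda>i j. Y j i)"
  unfolding bipartite_tridiagonal_def by blast

lemma sum_atMost_neighbours:
  fixes g :: "nat \<Rightarrow> 'a::comm_monoid_add"
  assumes "j \<le> d" and "\<And>i. i \<le> d \<Longrightarrow> i + 1 \<noteq> j \<Longrightarrow> i \<noteq> j + 1 \<Longrightarrow> g i = 0"
  shows "(\<Sum>i\<le>d. g i) = (if 0 < j then g (j - 1) else 0) + (if j < d then g (j + 1) else 0)"
proof -
  have "(\<Sum>i\<le>d. g i) = (\<Sum>i\<in>{i. i \<le> d \<and> (i + 1 = j \<or> i = j + 1)}. g i)"
    using assms(2) by (intro sum.mono_neutral_right) auto
  also have "{i. i \<le> d \<and> (i + 1 = j \<or> i = j + 1)}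
      = (if 0 < j then {j - 1} else {}) \<union> (if j < d then {j + 1} else {})"
    using assms(1) by auto
  finally show ?thesis by (cases "0 < j"; cases "j < d") (auto simp: add.commute)
qed

lemma bipartite_tridiagonal_row_sum:
  fixes Y :: "nat \<Rightarrow> nat \<Rightarrow> 'a::semiring_0"
  assumes "bipartite_tridiagonal d Y" and "i \<le> d"
  shows "(\<Sum>j\<le>d. Y i j * x j)
    = (if 0 < i then Y i (i - 1) * x (i - 1) else 0) + (if i < d then Y i (i + 1) * x (i + 1) else 0)"
proof (rule sum_atMost_neighbours[OF assms(2)])
  fix j assume "j \<le> d" "j + 1 \<noteq> i" "j \<noteq> i + 1"
  with assms have "Y i j = 0" unfolding bipartite_tridiagonal_def by auto
  then show "Y i j * x j = 0" by simp
qed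

lemma bipartite_tridiagonal_eigenvector_vanishes:
  fixes Y :: "nat \<Rightarrow> nat \<Rightarrow> 'a::idom"
  assumes tri: "bipartite_tridiagonal d Y"
    and eig: "\<And>i. i \<le> d \<Longrightarrow> (\<Sum>j\<le>d. Y i j * x j) = t * x i"
    and "x 0 = 0" and "k \<le> d"
  shows "x k = 0"
  using \<open>k \<le> d\<close>
proof (induction k rule: less_induct)
  case (less k)
  show ?case
  proof (cases k)
    case 0
    with \<open>x 0 = 0\<close> show ?thesis by simp
  next
    case (Suc i)
    \<comment> \<open>row \<open>i\<close> is the first one involving \<open>x k\<close>, and all its other entries already vanish\<close>
    have "i < d" "i < k" using less.prems Suc by auto
    have row: "(if 0 < i then Y i (i - 1) * x (i - 1) else 0) + Y i k * x k = t * x i"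
      using eig[of i] bipartite_tridiagonal_row_sum[OF tri, of i x] \<open>i < d\<close> Suc by simp
    have "x i = 0" using less.IH \<open>i < k\<close> less.prems by simp
    moreover have "x (i - 1) = 0" if "0 < i" using less.IH \<open>i < k\<close> less.prems by simp
    ultimately have "Y i k * x k = 0" using row by (simp split: if_splits)
    moreover have "Y i k \<noteq> 0"
      using tri \<open>i < d\<close> Suc unfolding bipartite_tridiagonal_def by simp
    ultimately show ?thesis by simp
  qed
qed

lemma bipartite_tridiagonal_eigenvector_const:
  fixes Y :: "nat \<Rightarrow> nat \<Rightarrow> 'a::idom"
  assumes tri: "bipartite_tridiagonal d Y"
    and row_sums: "\<And>i. i \<le> d \<Longrightarrow> (\<Sum>j\<le>d. Y i j) = t"
    and eig: "\<And>i. i \<le> d \<Longrightarrow> (\<Sum>j\<le>d. Y i j * x j) = t * x i"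
    and "k \<le> d"
  shows "x k = x 0"
proof -
  have shifted: "(\<Sum>j\<le>d. Y i j * (x j - x 0)) = t * (x i - x 0)" if "i \<le> d" for i
  proof -
    have "(\<Sum>j\<le>d. Y i j * (x j - x 0)) = (\<Sum>j\<le>d. Y i j * x j) - (\<Sum>j\<le>d. Y i j) * x 0"
      unfolding right_diff_distrib sum_subtractf sum_distrib_right ..
    also have "\<dots> = t * (x i - x 0)"
      unfolding eig[OF that] row_sums[OF that] right_diff_distrib ..
    finally show ?thesis .
  qed
  have "x k - x 0 = 0"
    by (rule bipartite_tridiagonal_eigenvector_vanishes[OF tri shifted]) (simp_all add: \<open>k \<le> d\<close>)
  then show ?thesis by simp
qed

text \<open>Below, \<open>Z\<close> is the transpose of the tridiagonal matrix \<open>Y\<close> representing \<open>A\<close>, \<open>y\<close> the common row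
  of the matrix of \<open>E\<^sub>0\<close>, and \<open>s\<close> the eigenvalues of \<open>A*\<close>.\<close>
context
  fixes d :: nat and Z :: "nat \<Rightarrow> nat \<Rightarrow> 'a::field" and y s :: "nat \<Rightarrow> 'a" and t0 t1 \<kappa> :: 'a
  assumes tri: "bipartite_tridiagonal d Z"
    and eig: "\<And>j. j \<le> d \<Longrightarrow> (\<Sum>i\<le>d. Z j i * y i) = t0 * y j"
    and twisted: "\<And>j. j \<le> d \<Longrightarrow> (\<Sum>i\<le>d. Z j i * (s i * y i)) = (t1 * s j + \<kappa>) * y j"
begin

lemma twisted_offset:
  assumes "1 \<le> d" and "y 0 \<noteq> 0"
  shows "\<kappa> = t0 * s 1 - t1 * s 0"
proof -
  have row0: "Z 0 1 * y 1 = t0 * y 0" "Z 0 1 * (s 1 * y 1) = (t1 * s 0 + \<kappa>) * y 0"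
    using eig[of 0] twisted[of 0] bipartite_tridiagonal_row_sum[OF tri] assms(1) by auto
  have "(t1 * s 0 + \<kappa>) * y 0 = s 1 * (t0 * y 0)"
    unfolding row0(1)[symmetric] row0(2)[symmetric] by (simp only: mult.left_commute)
  then have "\<kappa> * y 0 = (t0 * s 1 - t1 * s 0) * y 0"
    by (simp add: algebra_simps)
  with assms(2) show ?thesis by simp
qed

lemma twisted_neighbour_relations:
  assumes "1 \<le> j" and "j < d" and offset: "\<kappa> = t0 * s 1 - t1 * s 0"
  shows "(s (j + 1) - s (j - 1)) * (Z j (j + 1) * y (j + 1))
      = (t1 * (s j - s 0) - t0 * (s (j - 1) - s 1)) * y j"
    and "(s (j - 1) - s (j + 1)) * (Z j (j - 1) * y (j - 1))
      = (t1 * (s j - s 0) - t0 * (s (j + 1) - s 1)) * y j"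
proof -
  define a b where "a = Z j (j - 1) * y (j - 1)" and "b = Z j (j + 1) * y (j + 1)"
  have sum: "a + b = t0 * y j" and weighted: "s (j - 1) * a + s (j + 1) * b = (t1 * s j + \<kappa>) * y j"
    using eig[of j] twisted[of j] assms(1,2) bipartite_tridiagonal_row_sum[OF tri, of j y]
      bipartite_tridiagonal_row_sum[OF tri, of j "\<lambda>i. s i * y i"]
    unfolding a_def b_def by (simp_all add: mult.left_commute)
  have "(s (j + 1) - s (j - 1)) * b = (s (j - 1) * a + s (j + 1) * b) - s (j - 1) * (a + b)"
    by (simp add: algebra_simps)
  also have "\<dots> = (t1 * (s j - s 0) - t0 * (s (j - 1) - s 1)) * y j"
    unfolding sum weighted offset by (simp add: algebra_simps)
  finally show "(s (j + 1) - s (j - 1)) * (Z j (j + 1) * y (j + 1))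
      = (t1 * (s j - s 0) - t0 * (s (j - 1) - s 1)) * y j"
    unfolding b_def .
  have "(s (j - 1) - s (j + 1)) * a = (s (j - 1) * a + s (j + 1) * b) - s (j + 1) * (a + b)"
    by (simp add: algebra_simps)
  also have "\<dots> = (t1 * (s j - s 0) - t0 * (s (j + 1) - s 1)) * y j"
    unfolding sum weighted offset by (simp add: algebra_simps)
  finally show "(s (j - 1) - s (j + 1)) * (Z j (j - 1) * y (j - 1))
      = (t1 * (s j - s 0) - t0 * (s (j + 1) - s 1)) * y j"
    unfolding a_def .
qed

lemma twisted_eigenvector_nowhere_zero:
  assumes inj: "inj_on s {0..d}" and "y 0 \<noteq> 0" and "k \<le> d"
  shows "y k \<noteq> 0"
  using \<open>k \<le> d\<close>
proof (induction k)
  case 0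
  with \<open>y 0 \<noteq> 0\<close> show ?case by simp
next
  case (Suc k)
  show ?case
  proof
    assume zero: "y (Suc k) = 0"
    have "Z (Suc k) k * y k = 0"
    proof (cases "Suc k = d")
      case True
      then have "k = d - 1" by simp
      then show ?thesis
        using eig[of "Suc k"] zero bipartite_tridiagonal_row_sum[OF tri, of "Suc k"] True by simp
    next
      case False
      have "s k \<noteq> s (k + 2)" using inj Suc.prems False by (auto dest: inj_onD)
      moreover have "(s k - s (k + 2)) * (Z (Suc k) k * y k) = 0"
        using twisted_neighbour_relations(2)[of "Suc k"] twisted_offset Suc.prems False zero
          \<open>y 0 \<noteq> 0\<close> by simp
      ultimately show ?thesis by simp
    qed
    moreover have "Z (Suc k) k \<noteq> 0"
      using tri Suc.prems unfolding bipartite_tridiagonal_def by auto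
    ultimately show False using Suc by simp
  qed
qed

lemma twisted_eigenvector_ratio_ne:
  assumes inj: "inj_on s {0..d}" and nonzero: "\<exists>k\<le>d. y k \<noteq> 0"
  shows "\<forall>i. 1 \<le> i \<and> i \<le> d - 1 \<longrightarrow>
    t0 * ((s (i - 1) - s 1) / (s i - s 0)) \<noteq> t1 \<and> t0 * ((s (i + 1) - s 1) / (s i - s 0)) \<noteq> t1"
proof (intro allI impI conjI)
  fix i assume "1 \<le> i \<and> i \<le> d - 1"
  then have i: "1 \<le> i" "i < d" by auto
  have "y 0 \<noteq> 0"
    using nonzero bipartite_tridiagonal_eigenvector_vanishes[OF tri eig] by blast
  then have nowhere_zero: "y k \<noteq> 0" if "k \<le> d" for k
    using twisted_eigenvector_nowhere_zero[OF inj _ that] by blast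
  have offset: "\<kappa> = t0 * s 1 - t1 * s 0"
    using twisted_offset \<open>y 0 \<noteq> 0\<close> i by simp
  have s_ne: "s a \<noteq> s b" if "a \<le> d" "b \<le> d" "a \<noteq> b" for a b
    using inj that by (auto dest: inj_onD)
  have Z_ne: "Z i (i - 1) \<noteq> 0" "Z i (i + 1) \<noteq> 0"
    using tri i unfolding bipartite_tridiagonal_def by auto
  have denom: "s i - s 0 \<noteq> 0" using s_ne[of i 0] i by simp
  show "t0 * ((s (i - 1) - s 1) / (s i - s 0)) \<noteq> t1"
  proof
    assume "t0 * ((s (i - 1) - s 1) / (s i - s 0)) = t1"
    then have "t1 * (s i - s 0) - t0 * (s (i - 1) - s 1) = 0"
      using denom by (simp add: field_simps)
    then have "(s (i + 1) - s (i - 1)) * (Z i (i + 1) * y (i + 1)) = 0"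
      using twisted_neighbour_relations(1)[OF i offset] by simp
    then show False using s_ne[of "i + 1" "i - 1"] Z_ne nowhere_zero[of "i + 1"] i by simp
  qed
  show "t0 * ((s (i + 1) - s 1) / (s i - s 0)) \<noteq> t1"
  proof
    assume "t0 * ((s (i + 1) - s 1) / (s i - s 0)) = t1"
    then have "t1 * (s i - s 0) - t0 * (s (i + 1) - s 1) = 0"
      using denom by (simp add: field_simps)
    then have "(s (i - 1) - s (i + 1)) * (Z i (i - 1) * y (i - 1)) = 0"
      using twisted_neighbour_relations(2)[OF i offset] by simp
    then show False using s_ne[of "i - 1" "i + 1"] Z_ne nowhere_zero[of "i - 1"] i by simp
  qed
qed

end

section \<open>Finite sums of vectors and matrices\<close>

lemma index_mult_mat_sum:
  assumes "A \<in> carrier_mat nr n" and "B \<in> carrier_mat n nc" and "r < nr" and "c < nc"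
  shows "(A * B) $$ (r, c) = (\<Sum>k<n. A $$ (r, k) * B $$ (k, c))"
  using assms by (simp add: scalar_prod_def atLeast0LessThan)

lemma index_mult_mat_vec_sum:
  assumes "A \<in> carrier_mat m n" and "w \<in> carrier_vec n" and "r < m"
  shows "(A *\<^sub>v w) $ r = (\<Sum>k<n. A $$ (r, k) * w $ k)"
  using assms by (simp add: scalar_prod_def atLeast0LessThan)

lemma index_mult_mat_of_fun:
  fixes Y :: "nat \<Rightarrow> nat \<Rightarrow> 'a::comm_ring_1"
  assumes "X \<in> carrier_mat m (d + 1)" and "r < m" and "j \<le> d"
  shows "(X * mat (d + 1) (d + 1) (\<lambda>(i, j). Y i j)) $$ (r, j) = (\<Sum>i\<le>d. X $$ (r, i) * Y i j)"
proof -
  have "(X * mat (d + 1) (d + 1) (\<lambda>(i, j). Y i j)) $$ (r, j)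
      = (\<Sum>i<d + 1. X $$ (r, i) * mat (d + 1) (d + 1) (\<lambda>(i, j). Y i j) $$ (i, j))"
    using assms by (intro index_mult_mat_sum) auto
  also have "\<dots> = (\<Sum>i<d + 1. X $$ (r, i) * Y i j)" using assms by (intro sum.cong) auto
  finally show ?thesis by (simp only: lessThan_Suc_atMost Suc_eq_plus1[symmetric])
qed

lemma index_mat_of_fun_mult:
  fixes Y :: "nat \<Rightarrow> nat \<Rightarrow> 'a::comm_ring_1"
  assumes "X \<in> carrier_mat (d + 1) nc" and "i \<le> d" and "k < nc"
  shows "(mat (d + 1) (d + 1) (\<lambda>(i, j). Y i j) * X) $$ (i, k) = (\<Sum>j\<le>d. Y i j * X $$ (j, k))"
proof -
  have "(mat (d + 1) (d + 1) (\<lambda>(i, j). Y i j) * X) $$ (i, k)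
      = (\<Sum>j<d + 1. mat (d + 1) (d + 1) (\<lambda>(i, j). Y i j) $$ (i, j) * X $$ (j, k))"
    using assms by (intro index_mult_mat_sum) auto
  also have "\<dots> = (\<Sum>j<d + 1. Y i j * X $$ (j, k))" using assms by (intro sum.cong) auto
  finally show ?thesis by (simp only: lessThan_Suc_atMost Suc_eq_plus1[symmetric])
qed

text \<open>Unlike \<open>finsum_vec\<close>, this entrywise sum needs no carrier assumptions to be evaluated.\<close>
definition vsum :: "nat \<Rightarrow> ('i \<Rightarrow> 'a::comm_monoid_add vec) \<Rightarrow> 'i set \<Rightarrow> 'a vec" where
  "vsum n w J = vec n (\<lambda>r. \<Sum>j\<in>J. w j $ r)"

lemma vsum_carrier [simp]: "vsum n w J \<in> carrier_vec n"
  and dim_vsum [simp]: "dim_vec (vsum n w J) = n"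
  and index_vsum [simp]: "r < n \<Longrightarrow> vsum n w J $ r = (\<Sum>j\<in>J. w j $ r)"
  unfolding vsum_def by simp_all

lemma vsum_cong: "(\<And>j. j \<in> J \<Longrightarrow> w j = w' j) \<Longrightarrow> vsum n w J = vsum n w' J"
  unfolding vsum_def by (simp cong: sum.cong)

lemma vsum_delta:
  assumes "finite J" and "j \<in> J" and w: "w \<in> carrier_vec n"
  shows "vsum n (\<lambda>k. if k = j then w else 0\<^sub>v n) J = w"
proof (rule eq_vecI)
  fix r assume "r < dim_vec w"
  then have r: "r < n" using w by simp
  then have "vsum n (\<lambda>k. if k = j then w else 0\<^sub>v n) J $ r = (\<Sum>k\<in>J. if k = j then w $ r else 0)"
    unfolding index_vsum[OF r] by (intro sum.cong) auto
  then show "vsum n (\<lambda>k. if k = j then w else 0\<^sub>v n) J $ r = w $ r" using assms(1,2) by simp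
qed (use w in simp)

lemma finsum_vec_eq_vsum:
  assumes "finite J" and "\<And>j. j \<in> J \<Longrightarrow> w j \<in> carrier_vec n"
  shows "finsum_vec TYPE('a::comm_monoid_add) n w J = vsum n w J"
proof -
  have "finsum_vec TYPE('a) n w J \<in> carrier_vec n"
    using finsum_vec_closed[of w J n] assms by auto
  then show ?thesis
    by (intro eq_vecI) (use assms in \<open>auto simp: index_finsum_vec\<close>)
qed

lemma mult_mat_vec_vsum:
  fixes A :: "'a::comm_ring_1 mat"
  assumes A: "A \<in> carrier_mat m n" and w: "\<And>j. j \<in> J \<Longrightarrow> w j \<in> carrier_vec n"
  shows "A *\<^sub>v vsum n w J = vsum m (\<lambda>j. A *\<^sub>v w j) J"
proof (rule eq_vecI)
  fix r assume "r < dim_vec (vsum m (\<lambda>j. A *\<^sub>v w j) J)"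
  then have r: "r < m" by simp
  have "(A *\<^sub>v vsum n w J) $ r = (\<Sum>k<n. A $$ (r, k) * vsum n w J $ k)"
    using A r by (intro index_mult_mat_vec_sum) simp_all
  also have "\<dots> = (\<Sum>k<n. A $$ (r, k) * (\<Sum>j\<in>J. w j $ k))"
    by (intro sum.cong) simp_all
  also have "\<dots> = (\<Sum>j\<in>J. \<Sum>k<n. A $$ (r, k) * w j $ k)"
    by (simp add: sum_distrib_left sum.swap[of _ J])
  also have "\<dots> = vsum m (\<lambda>j. A *\<^sub>v w j) J $ r"
    using A w r by (simp add: index_mult_mat_vec_sum[OF A] del: index_mult_mat_vec)
  finally show "(A *\<^sub>v vsum n w J) $ r = vsum m (\<lambda>j. A *\<^sub>v w j) J $ r" .
qed (use A in simp)

lemma smult_mat_mult_mat_vec: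
  fixes X :: "'a::comm_ring_1 mat"
  assumes "X \<in> carrier_mat m n" and "w \<in> carrier_vec n"
  shows "(c \<cdot>\<^sub>m X) *\<^sub>v w = c \<cdot>\<^sub>v (X *\<^sub>v w)"
  using assms by (intro eq_vecI) (auto simp: scalar_prod_def sum_distrib_left ac_simps)

lemma eq_mat_by_mult_vecI:
  fixes X Y :: "'a::comm_ring_1 mat"
  assumes "X \<in> carrier_mat m n" and "Y \<in> carrier_mat m n"
    and "\<And>w. w \<in> carrier_vec n \<Longrightarrow> X *\<^sub>v w = Y *\<^sub>v w"
  shows "X = Y"
proof (rule eq_matI)
  fix i j assume "i < dim_row Y" and "j < dim_col Y"
  moreover have "X *\<^sub>v unit_vec n j = Y *\<^sub>v unit_vec n j" by (rule assms(3)) simp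
  ultimately have "(X *\<^sub>v unit_vec n j) $ i = (Y *\<^sub>v unit_vec n j) $ i" by simp
  with assms(1,2) \<open>i < dim_row Y\<close> \<open>j < dim_col Y\<close> show "X $$ (i, j) = Y $$ (i, j)"
    by simp
qed (use assms in auto)

lemma msum_carrier [simp]: "msum n f I \<in> carrier_mat n n"
  and dim_row_msum [simp]: "dim_row (msum n f I) = n"
  and dim_col_msum [simp]: "dim_col (msum n f I) = n"
  and index_msum [simp]: "r < n \<Longrightarrow> c < n \<Longrightarrow> msum n f I $$ (r, c) = (\<Sum>i\<in>I. f i $$ (r, c))"
  unfolding msum_def by simp_all

lemma msum_cong: "(\<And>i. i \<in> I \<Longrightarrow> f i = g i) \<Longrightarrow> msum n f I = msum n g I"
  unfolding msum_def by (simp cong: sum.cong)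

lemma mult_msum:
  fixes X :: "'a::comm_ring_1 mat"
  assumes X: "X \<in> carrier_mat n n" and f: "\<And>i. i \<in> I \<Longrightarrow> f i \<in> carrier_mat n n"
  shows "X * msum n f I = msum n (\<lambda>i. X * f i) I"
proof (rule eq_matI)
  fix r c assume "r < dim_row (msum n (\<lambda>i. X * f i) I)" and "c < dim_col (msum n (\<lambda>i. X * f i) I)"
  then have r: "r < n" and c: "c < n" by simp_all
  have "(X * msum n f I) $$ (r, c) = (\<Sum>k<n. X $$ (r, k) * msum n f I $$ (k, c))"
    using X r c by (intro index_mult_mat_sum) simp_all
  also have "\<dots> = (\<Sum>k<n. X $$ (r, k) * (\<Sum>i\<in>I. f i $$ (k, c)))"
    using c by (intro sum.cong) simp_all
  also have "\<dots> = (\<Sum>i\<in>I. \<Sum>k<n. X $$ (r, k) * f i $$ (k, c))"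
    by (simp add: sum_distrib_left sum.swap[of _ I])
  also have "\<dots> = msum n (\<lambda>i. X * f i) I $$ (r, c)"
    unfolding index_msum[OF r c]
    by (intro sum.cong refl) (use r c in \<open>simp add: index_mult_mat_sum[OF X f] del: index_mult_mat\<close>)
  finally show "(X * msum n f I) $$ (r, c) = msum n (\<lambda>i. X * f i) I $$ (r, c)" .
qed (use X in simp_all)

lemma msum_mult:
  fixes X :: "'a::comm_ring_1 mat"
  assumes X: "X \<in> carrier_mat n n" and f: "\<And>i. i \<in> I \<Longrightarrow> f i \<in> carrier_mat n n"
  shows "msum n f I * X = msum n (\<lambda>i. f i * X) I"
proof (rule eq_matI)
  fix r c assume "r < dim_row (msum n (\<lambda>i. f i * X) I)" and "c < dim_col (msum n (\<lambda>i. f i * X) I)"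
  then have r: "r < n" and c: "c < n" by simp_all
  have "(msum n f I * X) $$ (r, c) = (\<Sum>k<n. msum n f I $$ (r, k) * X $$ (k, c))"
    using X r c by (intro index_mult_mat_sum) simp_all
  also have "\<dots> = (\<Sum>k<n. (\<Sum>i\<in>I. f i $$ (r, k)) * X $$ (k, c))"
    using r by (intro sum.cong) simp_all
  also have "\<dots> = (\<Sum>i\<in>I. \<Sum>k<n. f i $$ (r, k) * X $$ (k, c))"
    by (simp add: sum_distrib_right sum.swap[of _ I])
  also have "\<dots> = msum n (\<lambda>i. f i * X) I $$ (r, c)"
    unfolding index_msum[OF r c]
    by (intro sum.cong refl) (use r c in \<open>simp add: index_mult_mat_sum[OF f X] del: index_mult_mat\<close>)
  finally show "(msum n f I * X) $$ (r, c) = msum n (\<lambda>i. f i * X) I $$ (r, c)" .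
qed (use X in simp_all)

lemma msum_mult_vec:
  fixes w :: "'a::comm_ring_1 vec"
  assumes f: "\<And>i. i \<in> I \<Longrightarrow> f i \<in> carrier_mat n n" and w: "w \<in> carrier_vec n"
  shows "msum n f I *\<^sub>v w = vsum n (\<lambda>i. f i *\<^sub>v w) I"
proof (rule eq_vecI)
  fix r assume "r < dim_vec (vsum n (\<lambda>i. f i *\<^sub>v w) I)"
  then have r: "r < n" by simp
  have "(msum n f I *\<^sub>v w) $ r = (\<Sum>k<n. msum n f I $$ (r, k) * w $ k)"
    using w r by (intro index_mult_mat_vec_sum) simp_all
  also have "\<dots> = (\<Sum>k<n. (\<Sum>i\<in>I. f i $$ (r, k)) * w $ k)"
    using r by (intro sum.cong) simp_all
  also have "\<dots> = (\<Sum>i\<in>I. \<Sum>k<n. f i $$ (r, k) * w $ k)"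
    by (simp add: sum_distrib_right sum.swap[of _ I])
  also have "\<dots> = vsum n (\<lambda>i. f i *\<^sub>v w) I $ r"
    unfolding index_vsum[OF r]
    by (intro sum.cong refl) (use r in \<open>simp add: index_mult_mat_vec_sum[OF f w] del: index_mult_mat_vec\<close>)
  finally show "(msum n f I *\<^sub>v w) $ r = vsum n (\<lambda>i. f i *\<^sub>v w) I $ r" .
qed simp

lemma msum_single_term:
  assumes "finite I" and "j \<in> I" and "f j \<in> carrier_mat n n"
    and "\<And>i. i \<in> I \<Longrightarrow> i \<noteq> j \<Longrightarrow> f i = 0\<^sub>m n n"
  shows "msum n f I = f j"
proof (rule eq_matI)
  fix r c assume "r < dim_row (f j)" "c < dim_col (f j)"
  with assms show "msum n f I $$ (r, c) = f j $$ (r, c)"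
    by (simp add: sum.remove[of I j])
qed (use assms in simp_all)

lemma msum_two_terms:
  assumes "finite I" and "j \<in> I" and "k \<in> I" and "j \<noteq> k"
    and "f j \<in> carrier_mat n n" and "f k \<in> carrier_mat n n"
    and "\<And>i. i \<in> I \<Longrightarrow> i \<noteq> j \<Longrightarrow> i \<noteq> k \<Longrightarrow> f i = 0\<^sub>m n n"
  shows "msum n f I = f j + f k"
proof (rule eq_matI)
  fix r c assume "r < dim_row (f j + f k)" "c < dim_col (f j + f k)"
  with assms show "msum n f I $$ (r, c) = (f j + f k) $$ (r, c)"
    by (simp add: sum.remove[of I j] sum.remove[of "I - {j}" k])
qed (use assms in simp_all)

lemma mtrace_mult_comm:
  fixes X :: "'a::comm_ring_1 mat"
  assumes X: "X \<in> carrier_mat n m" and Y: "Y \<in> carrier_mat m n"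
  shows "mtrace (X * Y) = mtrace (Y * X)"
proof -
  have "mtrace (X * Y) = (\<Sum>i<n. \<Sum>k<m. X $$ (i, k) * Y $$ (k, i))"
    unfolding mtrace_def using X Y by (auto simp: scalar_prod_def atLeast0LessThan intro!: sum.cong)
  also have "\<dots> = (\<Sum>k<m. \<Sum>i<n. Y $$ (k, i) * X $$ (i, k))"
    by (subst sum.swap) (simp add: mult.commute)
  also have "\<dots> = mtrace (Y * X)"
    unfolding mtrace_def using X Y by (auto simp: scalar_prod_def atLeast0LessThan intro!: sum.cong)
  finally show ?thesis .
qed

section \<open>Coordinate projections and change of basis\<close>

text \<open>The matrix of \<open>E*\<^sub>i\<close> with respect to the normalizing basis.\<close>
definition coord_proj :: "nat \<Rightarrow> nat \<Rightarrow> 'a::{zero,one} mat" where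
  "coord_proj n i = mat_diag n (\<lambda>k. if k = i then 1 else 0)"

lemma coord_proj_carrier [simp]: "coord_proj n i \<in> carrier_mat n n"
  and dim_row_coord_proj [simp]: "dim_row (coord_proj n i) = n"
  and dim_col_coord_proj [simp]: "dim_col (coord_proj n i) = n"
  unfolding coord_proj_def by (simp_all add: mat_diag_def)

lemma coord_proj_sandwich:
  fixes M :: "'a::comm_ring_1 mat"
  assumes M: "M \<in> carrier_mat n n"
  shows "coord_proj n i * M * coord_proj n j
    = mat n n (\<lambda>(r, c). if r = i \<and> c = j then M $$ (i, j) else 0)"
proof -
  have "coord_proj n i * M * coord_proj n j
      = mat n n (\<lambda>(r, c). (coord_proj n i * M) $$ (r, c) * (if c = j then 1 else 0))"
    unfolding coord_proj_def[of n j]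
    by (rule mat_diag_mult_right) (rule mult_carrier_mat[OF coord_proj_carrier M])
  moreover have "coord_proj n i * M = mat n n (\<lambda>(r, c). (if r = i then 1 else 0) * M $$ (r, c))"
    unfolding coord_proj_def by (rule mat_diag_mult_left[OF M])
  ultimately show ?thesis by (auto intro!: eq_matI)
qed

lemma coord_proj_sandwich_eq_0_iff:
  fixes M :: "'a::comm_ring_1 mat"
  assumes "M \<in> carrier_mat n n" and "i < n" and "j < n"
  shows "coord_proj n i * M * coord_proj n j = 0\<^sub>m n n \<longleftrightarrow> M $$ (i, j) = 0"
proof
  assume "coord_proj n i * M * coord_proj n j = 0\<^sub>m n n"
  then have "(coord_proj n i * M * coord_proj n j) $$ (i, j) = 0" using assms by simp
  then show "M $$ (i, j) = 0" using assms by (simp add: coord_proj_sandwich)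
qed (use assms in \<open>auto simp: coord_proj_sandwich intro!: eq_matI\<close>)

lemma mtrace_coord_proj_mult:
  fixes M :: "'a::comm_ring_1 mat"
  assumes "M \<in> carrier_mat n n" and "i < n"
  shows "mtrace (coord_proj n i * M) = M $$ (i, i)"
proof -
  have "mtrace (coord_proj n i * M) = (\<Sum>k<n. (if k = i then 1 else 0) * M $$ (k, k))"
    using assms unfolding coord_proj_def mtrace_def by (simp add: mat_diag_mult_left)
  also have "\<dots> = (\<Sum>k<n. if k = i then M $$ (k, k) else 0)"
    by (intro sum.cong) auto
  finally show ?thesis using assms(2) by simp
qed

lemma msum_coord_proj:
  "msum (d + 1) (\<lambda>i. s i \<cdot>\<^sub>m coord_proj (d + 1) i) {0..d} = mat_diag (d + 1) (s :: nat \<Rightarrow> 'a::comm_ring_1)"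
proof (rule eq_matI)
  fix r c assume "r < dim_row (mat_diag (d + 1) s)" and "c < dim_col (mat_diag (d + 1) s)"
  then have "r < d + 1" "c < d + 1" by (simp_all add: mat_diag_def)
  then have "msum (d + 1) (\<lambda>i. s i \<cdot>\<^sub>m coord_proj (d + 1) i) {0..d} $$ (r, c)
      = (\<Sum>i\<in>{0..d}. (s i \<cdot>\<^sub>m coord_proj (d + 1) i) $$ (r, c))"
    by simp
  also have "\<dots> = (\<Sum>i\<in>{0..d}. if i = c then (if r = c then s c else 0) else 0)"
    using \<open>r < d + 1\<close> \<open>c < d + 1\<close> by (intro sum.cong) (auto simp: coord_proj_def mat_diag_def)
  also have "\<dots> = mat_diag (d + 1) s $$ (r, c)"
    using \<open>r < d + 1\<close> \<open>c < d + 1\<close> unfolding mat_diag_def by auto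
  finally show "msum (d + 1) (\<lambda>i. s i \<cdot>\<^sub>m coord_proj (d + 1) i) {0..d} $$ (r, c)
      = mat_diag (d + 1) s $$ (r, c)" .
qed (simp_all add: mat_diag_def)

text \<open>\<open>coords X\<close> represents \<open>X\<close> with respect to the basis formed by the columns of \<open>P\<close>.\<close>
locale basis_change =
  fixes n :: nat and P Q :: "'a::comm_ring_1 mat"
  assumes P: "P \<in> carrier_mat n n" and Q: "Q \<in> carrier_mat n n"
    and PQ: "P * Q = 1\<^sub>m n" and QP: "Q * P = 1\<^sub>m n"
begin

definition coords :: "'a mat \<Rightarrow> 'a mat" where
  "coords X = Q * X * P"

lemma coords_carrier: "X \<in> carrier_mat n n \<Longrightarrow> coords X \<in> carrier_mat n n"
  unfolding coords_def using P Q by simp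

lemma coords_mult:
  assumes "X \<in> carrier_mat n n" and "Y \<in> carrier_mat n n"
  shows "coords (X * Y) = coords X * coords Y"
proof -
  have "coords X * coords Y = Q * X * (P * Q) * Y * P"
    unfolding coords_def using P Q assms by (simp add: assoc_mult_mat[of _ n n _ n _ n])
  then show ?thesis unfolding coords_def PQ using P Q assms by simp
qed

lemma coords_add:
  "X \<in> carrier_mat n n \<Longrightarrow> Y \<in> carrier_mat n n \<Longrightarrow> coords (X + Y) = coords X + coords Y"
  unfolding coords_def using P Q
  by (simp add: mult_add_distrib_mat[of _ n n] add_mult_distrib_mat[of _ n n])

lemma coords_smult: "X \<in> carrier_mat n n \<Longrightarrow> coords (c \<cdot>\<^sub>m X) = c \<cdot>\<^sub>m coords X"
  unfolding coords_def using P Q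
  by (simp add: mult_smult_distrib[of _ n n _ n] mult_smult_assoc_mat[of _ n n _ n])

lemma coords_msum:
  "(\<And>i. i \<in> I \<Longrightarrow> f i \<in> carrier_mat n n) \<Longrightarrow> coords (msum n f I) = msum n (\<lambda>i. coords (f i)) I"
  unfolding coords_def using P Q by (simp add: mult_msum msum_mult)

lemma coords_eq_iff:
  assumes "X \<in> carrier_mat n n" and "Y \<in> carrier_mat n n"
  shows "coords X = coords Y \<longleftrightarrow> X = Y"
proof
  have recover: "P * coords Z * Q = Z" if "Z \<in> carrier_mat n n" for Z
  proof -
    have "P * coords Z * Q = (P * Q) * Z * (P * Q)"
      unfolding coords_def using P Q that by (simp add: assoc_mult_mat[of _ n n _ n _ n])
    then show ?thesis using that unfolding PQ by simp
  qed
  assume eq: "coords X = coords Y"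
  have "X = P * coords X * Q" using recover[OF assms(1)] by simp
  also have "\<dots> = Y" unfolding eq by (rule recover[OF assms(2)])
  finally show "X = Y" .
qed simp

lemma coords_zero: "coords (0\<^sub>m n n) = 0\<^sub>m n n"
  unfolding coords_def using P Q by simp

lemma coords_eqI:
  assumes X: "X \<in> carrier_mat n n" and M: "M \<in> carrier_mat n n" and XP: "X * P = P * M"
  shows "coords X = M"
proof -
  have "coords X = Q * (X * P)" unfolding coords_def using X P Q by (simp add: assoc_mult_mat)
  also have "\<dots> = (Q * P) * M" unfolding XP using M P Q by (simp add: assoc_mult_mat)
  also have "\<dots> = M" unfolding QP using M by simp
  finally show ?thesis .
qed

lemma mtrace_coords:
  assumes X: "X \<in> carrier_mat n n"
  shows "mtrace (coords X) = mtrace X"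
proof -
  have "mtrace (coords X) = mtrace (P * (Q * X))"
    unfolding coords_def using mtrace_mult_comm[of "Q * X" n n P] X P Q by simp
  also have "P * (Q * X) = X"
    using X P Q by (simp add: assoc_mult_mat[symmetric, of P n n Q n X n] PQ)
  finally show ?thesis .
qed

end

lemma (in basis_change) coords_msum_coord_proj:
  assumes n: "n = d + 1" and E: "\<And>i. i \<le> d \<Longrightarrow> E i \<in> carrier_mat n n"
    and cE: "\<And>i. i \<le> d \<Longrightarrow> coords (E i) = coord_proj n i"
  shows "coords (msum n (\<lambda>i. s i \<cdot>\<^sub>m E i) {0..d}) = mat_diag n s"
proof -
  have "coords (msum n (\<lambda>i. s i \<cdot>\<^sub>m E i) {0..d}) = msum n (\<lambda>i. coords (s i \<cdot>\<^sub>m E i)) {0..d}"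
    by (rule coords_msum) (use E in simp)
  also have "\<dots> = msum n (\<lambda>i. s i \<cdot>\<^sub>m coord_proj n i) {0..d}"
    by (rule msum_cong) (simp add: coords_smult E cE)
  also have "\<dots> = mat_diag n s" unfolding n by (rule msum_coord_proj)
  finally show ?thesis .
qed

lemma (in basis_change) coords_mult_eq_smult:
  assumes "X \<in> carrier_mat n n" and "Y \<in> carrier_mat n n" and "Z \<in> carrier_mat n n"
    and "X * Y = c \<cdot>\<^sub>m Z"
  shows "coords X * coords Y = c \<cdot>\<^sub>m coords Z"
  using assms by (simp add: coords_mult[symmetric] coords_smult)

lemma (in basis_change) coords_sandwich_eq:
  assumes F: "F \<in> carrier_mat n n" and B: "B \<in> carrier_mat n n" and X: "X \<in> carrier_mat n n"
    and eq: "F * B * X = a \<cdot>\<^sub>m (F * B) + b \<cdot>\<^sub>m (F * B * F)"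
  shows "coords F * coords B * coords X = a \<cdot>\<^sub>m (coords F * coords B) + b \<cdot>\<^sub>m (coords F * coords B * coords F)"
proof -
  have FB: "F * B \<in> carrier_mat n n" using F B by simp
  have "coords F * coords B * coords X = coords (F * B * X)"
    unfolding coords_mult[OF FB X] coords_mult[OF F B] ..
  also have "\<dots> = coords (a \<cdot>\<^sub>m (F * B) + b \<cdot>\<^sub>m (F * B * F))" unfolding eq ..
  also have "\<dots> = a \<cdot>\<^sub>m (coords F * coords B) + b \<cdot>\<^sub>m (coords F * coords B * coords F)"
    using FB F unfolding coords_add[OF smult_carrier_mat[OF FB] smult_carrier_mat[OF mult_carrier_mat[OF FB F]]]
    by (simp add: coords_smult coords_mult[OF FB F] coords_mult[OF F B])
  finally show ?thesis .
qed

section \<open>Spectral decomposition of a multiplicity-free matrix\<close>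

lemma eigenspace_of_iff:
  "A \<in> carrier_mat n n \<Longrightarrow> x \<in> eigenspace_of A t \<longleftrightarrow> x \<in> carrier_vec n \<and> A *\<^sub>v x = t \<cdot>\<^sub>v x"
  unfolding eigenspace_of_def by auto

lemma eigenspace_of_diff:
  fixes A :: "'a::field mat"
  assumes A: "A \<in> carrier_mat n n" and "x \<in> eigenspace_of A t" and "y \<in> eigenspace_of A t"
  shows "x - y \<in> eigenspace_of A t"
proof -
  have x: "x \<in> carrier_vec n" "A *\<^sub>v x = t \<cdot>\<^sub>v x" and y: "y \<in> carrier_vec n" "A *\<^sub>v y = t \<cdot>\<^sub>v y"
    using assms by (simp_all add: eigenspace_of_iff)
  have "A *\<^sub>v (x - y) = t \<cdot>\<^sub>v x - t \<cdot>\<^sub>v y"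
    using mult_minus_distrib_mat_vec[OF A x(1) y(1)] x y by simp
  also have "\<dots> = t \<cdot>\<^sub>v (x - y)"
    using x y by (intro eq_vecI) (simp_all add: right_diff_distrib)
  finally show ?thesis using A x y by (simp add: eigenspace_of_iff)
qed

lemma zero_vec_in_eigenspace_of: "A \<in> carrier_mat n n \<Longrightarrow> 0\<^sub>v n \<in> eigenspace_of A t"
  by (auto simp: eigenspace_of_iff intro!: eq_vecI)

lemma vsum_shifted_eigenvectors:
  fixes A :: "'a::field mat"
  assumes A: "A \<in> carrier_mat n n" and w: "\<And>i. i \<in> I \<Longrightarrow> w i \<in> eigenspace_of A (th i)"
  shows "vsum n (\<lambda>i. (th i - c) \<cdot>\<^sub>v w i) I = A *\<^sub>v vsum n w I - c \<cdot>\<^sub>v vsum n w I"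
proof (rule eq_vecI)
  fix r assume "r < dim_vec (A *\<^sub>v vsum n w I - c \<cdot>\<^sub>v vsum n w I)"
  then have r: "r < n" using A by simp
  have wc: "w i \<in> carrier_vec n" and Aw: "A *\<^sub>v w i = th i \<cdot>\<^sub>v w i" if "i \<in> I" for i
    using w[OF that] A by (simp_all add: eigenspace_of_iff)
  have wdim: "dim_vec (w i) = n" if "i \<in> I" for i using wc[OF that] by simp
  have "(A *\<^sub>v vsum n w I) $ r = vsum n (\<lambda>i. A *\<^sub>v w i) I $ r"
    by (simp add: mult_mat_vec_vsum[OF A wc])
  also have "\<dots> = (\<Sum>i\<in>I. th i * w i $ r)"
    unfolding index_vsum[OF r] by (intro sum.cong refl) (simp add: Aw wdim r)
  finally have "(A *\<^sub>v vsum n w I) $ r = (\<Sum>i\<in>I. th i * w i $ r)" .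
  moreover have "vsum n (\<lambda>i. (th i - c) \<cdot>\<^sub>v w i) I $ r = (\<Sum>i\<in>I. (th i - c) * w i $ r)"
    unfolding index_vsum[OF r] by (intro sum.cong refl) (simp add: wdim r)
  ultimately show "vsum n (\<lambda>i. (th i - c) \<cdot>\<^sub>v w i) I $ r = (A *\<^sub>v vsum n w I - c \<cdot>\<^sub>v vsum n w I) $ r"
    using r A by (simp add: left_diff_distrib sum_subtractf sum_distrib_left)
qed (use A in simp)

lemma eigenvectors_independent:
  fixes A :: "'a::field mat"
  assumes A: "A \<in> carrier_mat n n" and "finite J" and "inj_on th J"
    and "\<And>j. j \<in> J \<Longrightarrow> w j \<in> eigenspace_of A (th j)"
    and "vsum n w J = 0\<^sub>v n" and "j \<in> J"
  shows "w j = 0\<^sub>v n"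
  using assms(2-)
proof (induction J arbitrary: w j rule: finite_induct)
  case empty
  then show ?case by simp
next
  case (insert k J)
  have wc: "w i \<in> carrier_vec n" if "i \<in> insert k J" for i
    using insert.prems(2)[OF that] A by (simp add: eigenspace_of_iff)
  \<comment> \<open>applying \<open>A - th k\<close> removes the \<open>k\<close>-th summand\<close>
  have shifted: "(th i - th k) \<cdot>\<^sub>v w i = 0\<^sub>v n" if "i \<in> J" for i
  proof (rule insert.IH)
    show "inj_on th J" using insert.prems(1) by simp
    show "(th i - th k) \<cdot>\<^sub>v w i \<in> eigenspace_of A (th i)" if "i \<in> J" for i
      using insert.prems(2)[of i] that A
      by (simp add: eigenspace_of_iff mult_mat_vec smult_smult_assoc mult.commute)
    have "vsum n (\<lambda>i. (th i - th k) \<cdot>\<^sub>v w i) (insert k J) = A *\<^sub>v 0\<^sub>v n - th k \<cdot>\<^sub>v 0\<^sub>v n"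
      using vsum_shifted_eigenvectors[OF A, where I = "insert k J" and w = w and th = th and c = "th k"]
        insert.prems(2,3) by simp
    also have "\<dots> = 0\<^sub>v n" using A by (intro eq_vecI) auto
    finally have "vsum n (\<lambda>i. (th i - th k) \<cdot>\<^sub>v w i) (insert k J) = 0\<^sub>v n" .
    moreover have "vsum n (\<lambda>i. (th i - th k) \<cdot>\<^sub>v w i) (insert k J)
        = vsum n (\<lambda>i. (th i - th k) \<cdot>\<^sub>v w i) J"
      using insert.hyps carrier_vecD[OF wc[of k]] by (intro eq_vecI) simp_all
    ultimately show "vsum n (\<lambda>i. (th i - th k) \<cdot>\<^sub>v w i) J = 0\<^sub>v n" by simp
  qed fact
  have wJ: "w i = 0\<^sub>v n" if "i \<in> J" for i
  proof -
    have "th i \<noteq> th k" using insert.prems(1) insert.hyps(2) that unfolding inj_on_def by blast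
    moreover have "(th i - th k) * w i $ r = 0" if "r < n" for r
      using arg_cong[OF shifted[OF \<open>i \<in> J\<close>], of "\<lambda>v. v $ r"] wc[of i] \<open>i \<in> J\<close> that by simp
    ultimately show ?thesis using wc[of i] that by (intro eq_vecI) simp_all
  qed
  have "w k = 0\<^sub>v n"
  proof (rule eq_vecI)
    fix r assume "r < dim_vec (0\<^sub>v n)"
    then have "w k $ r + (\<Sum>i\<in>J. w i $ r) = 0"
      using arg_cong[OF insert.prems(3), of "\<lambda>v. v $ r"] insert.hyps by simp
    then show "w k $ r = 0\<^sub>v n $ r" using wJ \<open>r < dim_vec (0\<^sub>v n)\<close> by simp
  qed (use wc in simp)
  with wJ insert.prems(4) show ?case by auto
qed

lemma eigen_decomposition_unique:
  fixes A :: "'a::field mat"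
  assumes A: "A \<in> carrier_mat n n" and fin: "finite J" and inj: "inj_on th J"
    and w: "\<And>k. k \<in> J \<Longrightarrow> w k \<in> eigenspace_of A (th k)"
    and w': "\<And>k. k \<in> J \<Longrightarrow> w' k \<in> eigenspace_of A (th k)"
    and eq: "vsum n w J = vsum n w' J" and j: "j \<in> J"
  shows "w j = w' j"
proof -
  have c: "dim_vec (w k) = n" "dim_vec (w' k) = n" if "k \<in> J" for k
    using w[OF that] w'[OF that] A by (simp_all add: eigenspace_of_iff)
  have "w j - w' j = 0\<^sub>v n"
  proof (rule eigenvectors_independent[OF A fin inj _ _ j])
    show "w k - w' k \<in> eigenspace_of A (th k)" if "k \<in> J" for k
      using eigenspace_of_diff[OF A w[OF that] w'[OF that]] .
    show "vsum n (\<lambda>k. w k - w' k) J = 0\<^sub>v n"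
    proof (rule eq_vecI)
      fix r assume "r < dim_vec (0\<^sub>v n)"
      then have r: "r < n" by simp
      have "vsum n (\<lambda>k. w k - w' k) J $ r = (\<Sum>k\<in>J. w k $ r - w' k $ r)"
        unfolding index_vsum[OF r] using c r by (intro sum.cong) auto
      then show "vsum n (\<lambda>k. w k - w' k) J $ r = 0\<^sub>v n $ r"
        using arg_cong[OF eq, of "\<lambda>v. v $ r"] r by (simp add: sum_subtractf)
    qed simp
  qed
  show ?thesis
  proof (rule eq_vecI)
    fix r assume "r < dim_vec (w' j)"
    with c[OF j] \<open>w j - w' j = 0\<^sub>v n\<close> show "w j $ r = w' j $ r"
      by (metis diff_zero index_minus_vec(1) index_zero_vec(1) right_minus_eq)
  qed (use c[OF j] in simp)
qed

context
  fixes d :: nat and A :: "'a::field mat" and th :: "nat \<Rightarrow> 'a" and E :: "nat \<Rightarrow> 'a mat"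
  assumes A: "A \<in> carrier_mat (d + 1) (d + 1)" and mf: "mult_free_with d A th E"
begin

lemma mult_free_E_carrier: "l \<le> d \<Longrightarrow> E l \<in> carrier_mat (d + 1) (d + 1)"
  using mf unfolding mult_free_with_def by auto

lemma mult_free_E_range: "l \<le> d \<Longrightarrow> w \<in> carrier_vec (d + 1) \<Longrightarrow> E l *\<^sub>v w \<in> eigenspace_of A (th l)"
  using mf unfolding mult_free_with_def by auto

lemma mult_free_E_complement:
  assumes "l \<le> d" and "w \<in> carrier_vec (d + 1)"
  obtains u where "\<And>k. k \<in> {0..d} - {l} \<Longrightarrow> u k \<in> eigenspace_of A (th k)"
    and "w - E l *\<^sub>v w = vsum (d + 1) u ({0..d} - {l})"
proof -
  from mf assms obtain u where u: "\<forall>k\<in>{0..d} - {l}. u k \<in> eigenspace_of A (th k)"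
    and eq: "w - E l *\<^sub>v w = finsum_vec TYPE('a) (dim_row A) u ({0..d} - {l})"
    unfolding mult_free_with_def eigenspace_sum_def by blast
  have "finsum_vec TYPE('a) (d + 1) u ({0..d} - {l}) = vsum (d + 1) u ({0..d} - {l})"
    using u A by (intro finsum_vec_eq_vsum) (auto simp: eigenspace_of_iff)
  with eq A have "w - E l *\<^sub>v w = vsum (d + 1) u ({0..d} - {l})" by simp
  with u show ?thesis by (intro that) auto
qed

lemma mult_free_decomposition:
  assumes j: "j \<le> d" and w: "w \<in> carrier_vec (d + 1)"
  obtains u where "\<And>k. k \<le> d \<Longrightarrow> u k \<in> eigenspace_of A (th k)" and "u j = E j *\<^sub>v w"
    and "w = vsum (d + 1) u {0..d}"
proof -
  obtain u' where u': "\<And>k. k \<in> {0..d} - {j} \<Longrightarrow> u' k \<in> eigenspace_of A (th k)"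
    and rest: "w - E j *\<^sub>v w = vsum (d + 1) u' ({0..d} - {j})"
    using mult_free_E_complement[OF j w] by blast
  define u where "u = u'(j := E j *\<^sub>v w)"
  have "u k \<in> eigenspace_of A (th k)" if "k \<le> d" for k
    using u' mult_free_E_range[OF j w] that unfolding u_def by auto
  moreover have "u j = E j *\<^sub>v w" unfolding u_def by simp
  moreover have "w = vsum (d + 1) u {0..d}"
  proof (rule eq_vecI)
    fix r assume "r < dim_vec (vsum (d + 1) u {0..d})"
    then have r: "r < d + 1" by simp
    have "dim_vec (E j *\<^sub>v w) = d + 1" using mult_free_E_carrier[OF j] by simp
    then have "w $ r = (E j *\<^sub>v w) $ r + (\<Sum>k\<in>{0..d} - {j}. u' k $ r)"
      using arg_cong[OF rest, of "\<lambda>v. v $ r"] r w by (simp add: diff_eq_eq add.commute)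
    also have "(\<Sum>k\<in>{0..d} - {j}. u' k $ r) = (\<Sum>k\<in>{0..d} - {j}. u k $ r)"
      unfolding u_def by (intro sum.cong) auto
    finally show "w $ r = vsum (d + 1) u {0..d} $ r"
      using r j by (simp add: sum.remove[of _ j] u_def)
  qed (use w in simp)
  ultimately show ?thesis by (rule that)
qed

lemma mult_free_inj: "inj_on th {0..d}"
  using mf unfolding mult_free_with_def by simp

lemma mult_free_E_mult_eigenvector:
  assumes m: "m \<le> d" and l: "l \<le> d" and u: "u \<in> eigenspace_of A (th l)"
  shows "E m *\<^sub>v u = (if m = l then u else 0\<^sub>v (d + 1))"
proof -
  have uc: "u \<in> carrier_vec (d + 1)" using u A by (simp add: eigenspace_of_iff)
  obtain u' where u': "\<And>k. k \<le> d \<Longrightarrow> u' k \<in> eigenspace_of A (th k)"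
    and u'm: "u' m = E m *\<^sub>v u" and u_sum: "u = vsum (d + 1) u' {0..d}"
    using mult_free_decomposition[OF m uc] by blast
  \<comment> \<open>\<open>u\<close> is already its own decomposition into eigenvectors\<close>
  have "u' m = (if m = l then u else 0\<^sub>v (d + 1))"
  proof (rule eigen_decomposition_unique[OF A finite_atLeastAtMost mult_free_inj,
        where w = u' and w' = "\<lambda>k. if k = l then u else 0\<^sub>v (d + 1)"])
    show "(if k = l then u else 0\<^sub>v (d + 1)) \<in> eigenspace_of A (th k)" for k
      using u A by (simp add: zero_vec_in_eigenspace_of)
    have "vsum (d + 1) (\<lambda>k. if k = l then u else 0\<^sub>v (d + 1)) {0..d} = u"
      using l by (intro vsum_delta[OF finite_atLeastAtMost _ uc]) simp
    then show "vsum (d + 1) u' {0..d} = vsum (d + 1) (\<lambda>k. if k = l then u else 0\<^sub>v (d + 1)) {0..d}"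
      using u_sum by simp
  qed (use u' m in simp_all)
  with u'm show ?thesis by simp
qed

lemma mult_free_projections_orthogonal:
  assumes "l \<le> d" and "m \<le> d"
  shows "E l * E m = (if l = m then E l else 0\<^sub>m (d + 1) (d + 1))"
proof (rule eq_mat_by_mult_vecI[where m = "d + 1" and n = "d + 1"])
  fix w :: "'a vec" assume w: "w \<in> carrier_vec (d + 1)"
  have "(E l * E m) *\<^sub>v w = E l *\<^sub>v (E m *\<^sub>v w)"
    using mult_free_E_carrier[OF assms(1)] mult_free_E_carrier[OF assms(2)] w by simp
  also have "\<dots> = (if l = m then E l *\<^sub>v w else 0\<^sub>v (d + 1))"
    using mult_free_E_mult_eigenvector[OF assms mult_free_E_range[OF assms(2) w]]
      mult_free_E_mult_eigenvector[OF assms(1) assms(1) mult_free_E_range[OF assms(1) w]] by auto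
  also have "\<dots> = (if l = m then E l else 0\<^sub>m (d + 1) (d + 1)) *\<^sub>v w"
    using w by (auto intro!: eq_vecI)
  finally show "(E l * E m) *\<^sub>v w = (if l = m then E l else 0\<^sub>m (d + 1) (d + 1)) *\<^sub>v w" .
qed (use mult_carrier_mat[OF mult_free_E_carrier[OF assms(1)] mult_free_E_carrier[OF assms(2)]]
    mult_free_E_carrier[OF assms(1)] in auto)

lemma mult_free_projections_sum: "msum (d + 1) E {0..d} = 1\<^sub>m (d + 1)"
proof (rule eq_mat_by_mult_vecI[where m = "d + 1" and n = "d + 1"])
  fix w :: "'a vec" assume w: "w \<in> carrier_vec (d + 1)"
  obtain u where u: "\<And>k. k \<le> d \<Longrightarrow> u k \<in> eigenspace_of A (th k)" and wu: "w = vsum (d + 1) u {0..d}"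
    using mult_free_decomposition[OF le0 w] by blast
  \<comment> \<open>comparing with the decomposition belonging to \<open>E l\<close> identifies \<open>E l *\<^sub>v w\<close> with \<open>u l\<close>\<close>
  have "E l *\<^sub>v w = u l" if l: "l \<le> d" for l
  proof -
    obtain u' where u': "\<And>k. k \<le> d \<Longrightarrow> u' k \<in> eigenspace_of A (th k)"
      and "u' l = E l *\<^sub>v w" and "w = vsum (d + 1) u' {0..d}"
      using mult_free_decomposition[OF l w] by blast
    moreover have "u' l = u l"
      by (rule eigen_decomposition_unique[OF A finite_atLeastAtMost mult_free_inj])
        (use u u' l \<open>w = vsum (d + 1) u' {0..d}\<close> wu in simp_all)
    ultimately show ?thesis by simp
  qed
  then have "vsum (d + 1) (\<lambda>l. E l *\<^sub>v w) {0..d} = vsum (d + 1) u {0..d}"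
    by (intro vsum_cong) simp
  moreover have "msum (d + 1) E {0..d} *\<^sub>v w = vsum (d + 1) (\<lambda>l. E l *\<^sub>v w) {0..d}"
    by (rule msum_mult_vec) (use w mult_free_E_carrier in auto)
  ultimately have "msum (d + 1) E {0..d} *\<^sub>v w = vsum (d + 1) u {0..d}" by simp
  then show "msum (d + 1) E {0..d} *\<^sub>v w = 1\<^sub>m (d + 1) *\<^sub>v w" using wu w by simp
qed (use mult_free_E_carrier in auto)

lemma mult_free_A_mult_E:
  assumes l: "l \<le> d"
  shows "A * E l = th l \<cdot>\<^sub>m E l"
proof (rule eq_mat_by_mult_vecI[where m = "d + 1" and n = "d + 1"])
  fix w :: "'a vec" assume w: "w \<in> carrier_vec (d + 1)"
  have "(A * E l) *\<^sub>v w = A *\<^sub>v (E l *\<^sub>v w)" using A mult_free_E_carrier[OF l] w by simp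
  also have "\<dots> = (th l \<cdot>\<^sub>m E l) *\<^sub>v w"
    using mult_free_E_range[OF l w] A mult_free_E_carrier[OF l] w
    by (simp add: eigenspace_of_iff smult_mat_mult_mat_vec)
  finally show "(A * E l) *\<^sub>v w = (th l \<cdot>\<^sub>m E l) *\<^sub>v w" .
qed (use A mult_free_E_carrier[OF l] in auto)

lemma mult_free_spectral: "A = msum (d + 1) (\<lambda>l. th l \<cdot>\<^sub>m E l) {0..d}"
proof -
  have "A = A * msum (d + 1) E {0..d}" unfolding mult_free_projections_sum using A by simp
  also have "\<dots> = msum (d + 1) (\<lambda>l. A * E l) {0..d}"
    by (rule mult_msum[OF A]) (use mult_free_E_carrier in simp)
  also have "\<dots> = msum (d + 1) (\<lambda>l. th l \<cdot>\<^sub>m E l) {0..d}"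
    by (rule msum_cong) (simp add: mult_free_A_mult_E)
  finally show ?thesis .
qed

lemma mult_free_E_mult_A:
  assumes l: "l \<le> d"
  shows "E l * A = th l \<cdot>\<^sub>m E l"
proof -
  have "E l * A = E l * msum (d + 1) (\<lambda>k. th k \<cdot>\<^sub>m E k) {0..d}"
    using mult_free_spectral by simp
  also have "\<dots> = msum (d + 1) (\<lambda>k. E l * (th k \<cdot>\<^sub>m E k)) {0..d}"
    by (rule mult_msum) (use mult_free_E_carrier l in simp_all)
  also have "\<dots> = msum (d + 1) (\<lambda>k. th k \<cdot>\<^sub>m (E l * E k)) {0..d}"
    by (rule msum_cong, rule mult_smult_distrib[OF mult_free_E_carrier[OF l] mult_free_E_carrier]) simp
  also have "\<dots> = th l \<cdot>\<^sub>m (E l * E l)"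
    by (rule msum_single_term)
      (use l mult_free_E_carrier in \<open>auto simp: mult_free_projections_orthogonal\<close>)
  also have "\<dots> = th l \<cdot>\<^sub>m E l" using l by (simp add: mult_free_projections_orthogonal)
  finally show ?thesis .
qed

lemma mult_free_projections_distinct: "1 \<le> l \<Longrightarrow> l \<le> d \<Longrightarrow> E 0 \<noteq> E l"
proof
  assume l: "1 \<le> l" "l \<le> d" and eq: "E 0 = E l"
  from mf l have "eigenvalue A (th l)" unfolding mult_free_with_def by auto
  then obtain x where x: "x \<in> carrier_vec (d + 1)" "x \<noteq> 0\<^sub>v (d + 1)" "A *\<^sub>v x = th l \<cdot>\<^sub>v x"
    unfolding eigenvalue_def eigenvector_def using A by auto
  then have "x \<in> eigenspace_of A (th l)" using A by (simp add: eigenspace_of_iff)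
  from mult_free_E_mult_eigenvector[OF _ l(2) this, of 0] mult_free_E_mult_eigenvector[OF l(2) l(2) this]
  show False using l eq x(2) by simp
qed

lemma mult_free_sandwich_mult_A:
  assumes j: "j \<le> d" and k: "k \<le> d" and "j \<noteq> k" and B: "B \<in> carrier_mat (d + 1) (d + 1)"
    and zero: "\<And>l. l \<le> d \<Longrightarrow> l \<noteq> j \<Longrightarrow> l \<noteq> k \<Longrightarrow> E j * B * E l = 0\<^sub>m (d + 1) (d + 1)"
  shows "E j * B * A = th k \<cdot>\<^sub>m (E j * B) + (th j - th k) \<cdot>\<^sub>m (E j * B * E j)"
proof -
  define N where "N = E j * B"
  have N: "N \<in> carrier_mat (d + 1) (d + 1)" unfolding N_def using mult_free_E_carrier[OF j] B by simp
  have E: "E l \<in> carrier_mat (d + 1) (d + 1)" if "l \<le> d" for l using mult_free_E_carrier that .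
  \<comment> \<open>only the summands for \<open>j\<close> and \<open>k\<close> survive in \<open>N * A\<close> and in \<open>N = N * 1\<close>\<close>
  have "N * A = msum (d + 1) (\<lambda>l. N * (th l \<cdot>\<^sub>m E l)) {0..d}"
    by (subst mult_free_spectral) (rule mult_msum[OF N], use E in simp)
  also have "\<dots> = msum (d + 1) (\<lambda>l. th l \<cdot>\<^sub>m (N * E l)) {0..d}"
    by (rule msum_cong, rule mult_smult_distrib[OF N E]) simp
  also have "\<dots> = th j \<cdot>\<^sub>m (N * E j) + th k \<cdot>\<^sub>m (N * E k)"
    by (rule msum_two_terms) (use j k \<open>j \<noteq> k\<close> N E zero in \<open>auto simp: N_def\<close>)
  finally have NA: "N * A = th j \<cdot>\<^sub>m (N * E j) + th k \<cdot>\<^sub>m (N * E k)" .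
  have "N = N * msum (d + 1) E {0..d}" unfolding mult_free_projections_sum using N by simp
  also have "\<dots> = msum (d + 1) (\<lambda>l. N * E l) {0..d}" by (rule mult_msum[OF N]) (use E in simp)
  also have "\<dots> = N * E j + N * E k"
    by (rule msum_two_terms) (use j k \<open>j \<noteq> k\<close> N E zero in \<open>auto simp: N_def\<close>)
  finally have split: "N = N * E j + N * E k" .
  have "N * A = th k \<cdot>\<^sub>m N + (th j - th k) \<cdot>\<^sub>m (N * E j)"
  proof (rule eq_matI)
    fix r c assume "r < dim_row (th k \<cdot>\<^sub>m N + (th j - th k) \<cdot>\<^sub>m (N * E j))"
      and "c < dim_col (th k \<cdot>\<^sub>m N + (th j - th k) \<cdot>\<^sub>m (N * E j))"
    then have r: "r < d + 1" and c: "c < d + 1" using N E[OF j] by simp_all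
    have "N $$ (r, c) = (N * E j) $$ (r, c) + (N * E k) $$ (r, c)"
      using arg_cong[OF split, of "\<lambda>X. X $$ (r, c)"] r c N E[OF j] E[OF k] by simp
    then show "(N * A) $$ (r, c) = (th k \<cdot>\<^sub>m N + (th j - th k) \<cdot>\<^sub>m (N * E j)) $$ (r, c)"
      unfolding NA using r c N E[OF j] E[OF k] by (simp add: algebra_simps)
  qed (use N A E[OF j] in simp_all)
  then show ?thesis unfolding N_def .
qed

lemma mult_free_single_neighbour:
  assumes B: "B \<in> carrier_mat (d + 1) (d + 1)" and "1 \<le> d"
    and adj: "Delta_adj d E B 0 1"
    and nonadj: "\<forall>j\<le>d. j \<noteq> 0 \<and> j \<noteq> 1 \<longrightarrow> \<not> Delta_adj d E B 0 j"
  shows "E 0 * B * A = th 1 \<cdot>\<^sub>m (E 0 * B) + (th 0 - th 1) \<cdot>\<^sub>m (E 0 * B * E 0)"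
    and "E 0 \<noteq> 0\<^sub>m (d + 1) (d + 1)"
proof -
  have "E 0 * B * E l = 0\<^sub>m (d + 1) (d + 1)" if "l \<le> d" "l \<noteq> 0" "l \<noteq> 1" for l
    using nonadj mult_free_projections_distinct[of l] that unfolding Delta_adj_def by auto
  then show "E 0 * B * A = th 1 \<cdot>\<^sub>m (E 0 * B) + (th 0 - th 1) \<cdot>\<^sub>m (E 0 * B * E 0)"
    using mult_free_sandwich_mult_A[of 0 1 B] B \<open>1 \<le> d\<close> by simp
  show "E 0 \<noteq> 0\<^sub>m (d + 1) (d + 1)"
    using adj B mult_free_E_carrier[of 1] \<open>1 \<le> d\<close> unfolding Delta_adj_def by auto
qed

end

section \<open>The normalizing basis\<close>

lemma injective_mat_basis_change:
  fixes P :: "'a::field mat"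
  assumes P: "P \<in> carrier_mat n n"
    and inj: "\<And>c. c \<in> carrier_vec n \<Longrightarrow> P *\<^sub>v c = 0\<^sub>v n \<Longrightarrow> c = 0\<^sub>v n"
  obtains Q where "basis_change n P Q"
proof -
  have "det P \<noteq> 0" using det_0_iff_vec_prod_zero[OF P] inj by auto
  from det_non_zero_imp_unit[OF P this, of "()"]
  obtain Q where "Q \<in> carrier_mat n n" "Q * P = 1\<^sub>m n" "P * Q = 1\<^sub>m n"
    unfolding Units_def ring_mat_def by auto
  with P show ?thesis by (intro that basis_change.intro)
qed

lemma mat_of_vectors_mult_vec:
  fixes v :: "nat \<Rightarrow> 'a::comm_ring_1 vec"
  assumes v: "\<And>k. k \<le> d \<Longrightarrow> v k \<in> carrier_vec (d + 1)" and c: "c \<in> carrier_vec (d + 1)"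
  shows "mat (d + 1) (d + 1) (\<lambda>(r, k). v k $ r) *\<^sub>v c = vsum (d + 1) (\<lambda>k. c $ k \<cdot>\<^sub>v v k) {0..d}"
proof (rule eq_vecI)
  fix r assume "r < dim_vec (vsum (d + 1) (\<lambda>k. c $ k \<cdot>\<^sub>v v k) {0..d})"
  then have r: "r < d + 1" by simp
  have "(mat (d + 1) (d + 1) (\<lambda>(r, k). v k $ r) *\<^sub>v c) $ r = (\<Sum>k<d + 1. v k $ r * c $ k)"
    using r c by (subst index_mult_mat_vec_sum[where n = "d + 1"]) simp_all
  also have "\<dots> = (\<Sum>k\<in>{0..d}. (c $ k \<cdot>\<^sub>v v k) $ r)"
  proof (rule sum.cong)
    fix k assume "k \<in> {0..d}"
    then have "dim_vec (v k) = d + 1" using v by simp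
    then show "v k $ r * c $ k = (c $ k \<cdot>\<^sub>v v k) $ r" using r by (simp add: mult.commute)
  qed auto
  finally show "(mat (d + 1) (d + 1) (\<lambda>(r, k). v k $ r) *\<^sub>v c) $ r
      = vsum (d + 1) (\<lambda>k. c $ k \<cdot>\<^sub>v v k) {0..d} $ r"
    using r by simp
qed simp

lemma mat_of_vectors_basis_change:
  fixes v :: "nat \<Rightarrow> 'a::field vec"
  assumes v: "\<And>k. k \<le> d \<Longrightarrow> v k \<in> carrier_vec (d + 1)"
    and indep: "\<And>c. vsum (d + 1) (\<lambda>k. c k \<cdot>\<^sub>v v k) {0..d} = 0\<^sub>v (d + 1) \<Longrightarrow> \<forall>k\<le>d. c k = 0"
  obtains Q where "basis_change (d + 1) (mat (d + 1) (d + 1) (\<lambda>(r, k). v k $ r)) Q"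
proof (rule injective_mat_basis_change)
  fix c :: "'a vec"
  assume c: "c \<in> carrier_vec (d + 1)" "mat (d + 1) (d + 1) (\<lambda>(r, k). v k $ r) *\<^sub>v c = 0\<^sub>v (d + 1)"
  moreover have "mat (d + 1) (d + 1) (\<lambda>(r, k). v k $ r) *\<^sub>v c = vsum (d + 1) (\<lambda>k. c $ k \<cdot>\<^sub>v v k) {0..d}"
    by (rule mat_of_vectors_mult_vec) (use v c in auto)
  ultimately have "\<forall>k\<le>d. c $ k = 0" by (intro indep) simp
  then show "c = 0\<^sub>v (d + 1)" using c(1) by (intro eq_vecI) auto
qed (use that in simp_all)

lemma mat_of_vectors_intertwines:
  fixes v :: "nat \<Rightarrow> 'a::comm_ring_1 vec"
  assumes v: "\<And>k. k \<le> d \<Longrightarrow> v k \<in> carrier_vec (d + 1)"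
    and X: "X \<in> carrier_mat (d + 1) (d + 1)" and M: "M \<in> carrier_mat (d + 1) (d + 1)"
    and cols: "\<And>k. k \<le> d \<Longrightarrow> X *\<^sub>v v k = vsum (d + 1) (\<lambda>i. M $$ (i, k) \<cdot>\<^sub>v v i) {0..d}"
  shows "X * mat (d + 1) (d + 1) (\<lambda>(r, k). v k $ r) = mat (d + 1) (d + 1) (\<lambda>(r, k). v k $ r) * M"
proof (rule mat_col_eqI)
  let ?P = "mat (d + 1) (d + 1) (\<lambda>(r, k). v k $ r)"
  fix k assume "k < dim_col (?P * M)"
  then have k: "k \<le> d" using M by simp
  have "col ?P k = v k" using v[OF k] k by (intro eq_vecI) auto
  then have "col (X * ?P) k = X *\<^sub>v v k" using k by (subst col_mult2[OF X mat_carrier]) simp_all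
  also have "\<dots> = vsum (d + 1) (\<lambda>i. col M k $ i \<cdot>\<^sub>v v i) {0..d}"
    unfolding cols[OF k] using M k by (intro vsum_cong) auto
  also have "\<dots> = ?P *\<^sub>v col M k"
    by (rule mat_of_vectors_mult_vec[symmetric]) (use v col_carrier_vec[OF _ M, of k] k in auto)
  also have "\<dots> = col (?P * M) k" using k by (intro col_mult2[OF mat_carrier M, symmetric]) simp
  finally show "col (X * ?P) k = col (?P * M) k" .
qed (use X M in simp_all)

lemma normalizing_basis_change:
  fixes Es :: "nat \<Rightarrow> 'a::field mat"
  assumes Es: "orth_idem_system d Es" and A: "A \<in> carrier_mat (d + 1) (d + 1)"
    and norm: "normalizing d Es A t"
  obtains P Q Y where "basis_change (d + 1) P Q"
    and "basis_change.coords P Q A = mat (d + 1) (d + 1) (\<lambda>(i, j). Y i j)"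
    and "\<And>i. i \<le> d \<Longrightarrow> basis_change.coords P Q (Es i) = coord_proj (d + 1) i"
    and "\<And>i. i \<le> d \<Longrightarrow> (\<Sum>j\<le>d. Y i j) = t"
proof -
  obtain v Y where vs: "\<forall>i\<le>d. v i \<in> carrier_vec (d + 1) \<and> v i \<in> (\<lambda>x. Es i *\<^sub>v x) ` carrier_vec (d + 1)"
    and indep: "\<forall>c :: nat \<Rightarrow> 'a. finsum_vec TYPE('a) (d + 1) (\<lambda>i. c i \<cdot>\<^sub>v v i) {0..d} = 0\<^sub>v (d + 1)
      \<longrightarrow> (\<forall>i\<le>d. c i = 0)"
    and Av: "\<forall>j\<le>d. A *\<^sub>v v j = finsum_vec TYPE('a) (d + 1) (\<lambda>i. Y i j \<cdot>\<^sub>v v i) {0..d}"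
    and rows: "\<forall>i\<le>d. (\<Sum>j\<le>d. Y i j) = t"
    using norm unfolding normalizing_def by blast
  have v: "v i \<in> carrier_vec (d + 1)" and v_range: "v i \<in> (\<lambda>x. Es i *\<^sub>v x) ` carrier_vec (d + 1)"
    if "i \<le> d" for i
    using vs that by simp_all
  have Esc: "Es i \<in> carrier_mat (d + 1) (d + 1)"
    and Es_mult: "\<And>j. j \<le> d \<Longrightarrow> Es i * Es j = (if i = j then Es i else 0\<^sub>m (d + 1) (d + 1))"
    if "i \<le> d" for i
    using Es that unfolding orth_idem_system_def by auto
  have lincomb: "finsum_vec TYPE('a) (d + 1) (\<lambda>k. c k \<cdot>\<^sub>v v k) {0..d} = vsum (d + 1) (\<lambda>k. c k \<cdot>\<^sub>v v k) {0..d}"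
    for c using v by (intro finsum_vec_eq_vsum) auto
  define P where "P = mat (d + 1) (d + 1) (\<lambda>(r, k). v k $ r)"
  obtain Q where bc: "basis_change (d + 1) P Q"
    unfolding P_def by (rule mat_of_vectors_basis_change[where v = v]) (use v indep lincomb in auto)
  interpret basis_change "d + 1" P Q by (rule bc)
  have "A * P = P * mat (d + 1) (d + 1) (\<lambda>(i, j). Y i j)"
    unfolding P_def by (rule mat_of_vectors_intertwines[where v = v])
      (use v A Av lincomb in \<open>auto intro!: vsum_cong\<close>)
  then have "coords A = mat (d + 1) (d + 1) (\<lambda>(i, j). Y i j)" by (rule coords_eqI[OF A mat_carrier])
  moreover have "coords (Es i) = coord_proj (d + 1) i" if i: "i \<le> d" for i
  proof (rule coords_eqI[OF Esc[OF i] coord_proj_carrier])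
    show "Es i * P = P * coord_proj (d + 1) i"
      unfolding P_def
    proof (rule mat_of_vectors_intertwines[where v = v])
    fix k assume k: "k \<le> d"
    obtain x where x: "x \<in> carrier_vec (d + 1)" and vk: "v k = Es k *\<^sub>v x" using v_range[OF k] by blast
    \<comment> \<open>\<open>v k\<close> lies in the image of \<open>Es k\<close>, which \<open>Es i\<close> fixes or kills\<close>
    have "Es i *\<^sub>v v k = (Es i * Es k) *\<^sub>v x" using Esc[OF i] Esc[OF k] x unfolding vk by simp
    also have "\<dots> = (if k = i then 1 else 0) \<cdot>\<^sub>v v k"
      using Es_mult[OF i k] x Esc[OF k] unfolding vk by (cases "k = i") (auto intro!: eq_vecI)
    also have "\<dots> = vsum (d + 1) (\<lambda>j. if j = k then (if k = i then 1 else 0) \<cdot>\<^sub>v v k else 0\<^sub>v (d + 1)) {0..d}"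
      using k v[OF k] by (intro vsum_delta[symmetric]) auto
    also have "\<dots> = vsum (d + 1) (\<lambda>j. coord_proj (d + 1) i $$ (j, k) \<cdot>\<^sub>v v j) {0..d}"
      using k v[THEN carrier_vecD] by (intro vsum_cong) (auto simp: coord_proj_def mat_diag_def intro!: eq_vecI)
    finally show "Es i *\<^sub>v v k = vsum (d + 1) (\<lambda>j. coord_proj (d + 1) i $$ (j, k) \<cdot>\<^sub>v v j) {0..d}" .
    qed (use v Esc[OF i] in simp_all)
  qed
  ultimately show ?thesis using bc rows by (intro that) auto
qed

lemma coords_bipartite_tridiagonal:
  fixes Es :: "nat \<Rightarrow> 'a::field mat"
  assumes bc: "basis_change n P Q" and n: "n = d + 1" and A: "A \<in> carrier_mat n n"
    and Es: "\<And>i. i \<le> d \<Longrightarrow> Es i \<in> carrier_mat n n"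
    and cA: "basis_change.coords P Q A = mat n n (\<lambda>(i, j). Y i j)"
    and cEs: "\<And>i. i \<le> d \<Longrightarrow> basis_change.coords P Q (Es i) = coord_proj n i"
    and far: "\<forall>i\<le>d. \<forall>j\<le>d. (i > j + 1 \<or> j > i + 1) \<longrightarrow> Es i * A * Es j = 0\<^sub>m n n"
    and near: "\<forall>i\<le>d. \<forall>j\<le>d. (i = j + 1 \<or> j = i + 1) \<longrightarrow> Es i * A * Es j \<noteq> 0\<^sub>m n n"
    and bipartite: "bipartite_wrt d Es A"
  shows "bipartite_tridiagonal d Y"
proof -
  interpret basis_change n P Q by (rule bc)
  have sandwich_eq_0_iff: "Es i * A * Es j = 0\<^sub>m n n \<longleftrightarrow> Y i j = 0" if "i \<le> d" "j \<le> d" for i j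
  proof -
    have "Es i * A * Es j \<in> carrier_mat n n"
      using mult_carrier_mat[OF mult_carrier_mat[OF Es[OF that(1)] A] Es[OF that(2)]] .
    then have "Es i * A * Es j = 0\<^sub>m n n \<longleftrightarrow> coords (Es i * A * Es j) = coords (0\<^sub>m n n)"
      using coords_eq_iff by simp
    also have "coords (Es i * A * Es j) = coord_proj n i * mat n n (\<lambda>(i, j). Y i j) * coord_proj n j"
      using coords_mult[OF mult_carrier_mat[OF Es[OF that(1)] A] Es[OF that(2)]]
        coords_mult[OF Es[OF that(1)] A] that by (simp add: cA cEs)
    also have "coords (0\<^sub>m n n) = 0\<^sub>m n n" by (rule coords_zero)
    finally show ?thesis
      using coord_proj_sandwich_eq_0_iff[of "mat n n (\<lambda>(i, j). Y i j)" n i j] that n by simp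
  qed
  have diagonal: "Y i i = 0" if "i \<le> d" for i
  proof -
    have "mtrace (Es i * A) = mtrace (coords (Es i * A))"
      using mtrace_coords[OF mult_carrier_mat[OF Es[OF that] A]] by simp
    also have "\<dots> = mtrace (coord_proj n i * mat n n (\<lambda>(i, j). Y i j))"
      using Es A that by (simp add: coords_mult cA cEs)
    also have "\<dots> = Y i i" using mtrace_coord_proj_mult[of "mat n n (\<lambda>(i, j). Y i j)" n i] that n by simp
    finally show ?thesis using bipartite that unfolding bipartite_wrt_def by simp
  qed
  show ?thesis
    unfolding bipartite_tridiagonal_def
  proof (intro allI impI)
    fix i j assume i: "i \<le> d" and j: "j \<le> d"
    consider "i = j" | "i > j + 1 \<or> j > i + 1" | "i = j + 1 \<or> j = i + 1" by linarith
    then show "Y i j \<noteq> 0 \<longleftrightarrow> i = j + 1 \<or> j = i + 1"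
      using diagonal[OF i] sandwich_eq_0_iff[OF i j] far near i j by cases auto
  qed
qed

lemma bipartite_tridiagonal_eigenmatrix_rows_equal:
  fixes Y :: "nat \<Rightarrow> nat \<Rightarrow> 'a::field"
  assumes tri: "bipartite_tridiagonal d Y" and rows: "\<And>i. i \<le> d \<Longrightarrow> (\<Sum>j\<le>d. Y i j) = t"
    and F: "F \<in> carrier_mat (d + 1) (d + 1)"
    and right: "mat (d + 1) (d + 1) (\<lambda>(i, j). Y i j) * F = t \<cdot>\<^sub>m F"
    and "r \<le> d" and "k \<le> d"
  shows "F $$ (r, k) = F $$ (0, k)"
proof (rule bipartite_tridiagonal_eigenvector_const[OF tri rows _ \<open>r \<le> d\<close>])
  fix i assume i: "i \<le> d"
  have "(\<Sum>j\<le>d. Y i j * F $$ (j, k)) = (mat (d + 1) (d + 1) (\<lambda>(i, j). Y i j) * F) $$ (i, k)"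
    using F i \<open>k \<le> d\<close> by (intro index_mat_of_fun_mult[symmetric]) auto
  also have "\<dots> = t * F $$ (i, k)" unfolding right using F i \<open>k \<le> d\<close> by simp
  finally show "(\<Sum>j\<le>d. Y i j * F $$ (j, k)) = t * F $$ (i, k)" .
qed

lemma eigenprojection_twisted_row:
  fixes Y :: "nat \<Rightarrow> nat \<Rightarrow> 'a::field" and F :: "'a mat"
  assumes tri: "bipartite_tridiagonal d Y" and rows: "\<And>i. i \<le> d \<Longrightarrow> (\<Sum>j\<le>d. Y i j) = t0"
    and F: "F \<in> carrier_mat (d + 1) (d + 1)" and F_nonzero: "F \<noteq> 0\<^sub>m (d + 1) (d + 1)"
    and right: "mat (d + 1) (d + 1) (\<lambda>(i, j). Y i j) * F = t0 \<cdot>\<^sub>m F"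
    and left: "F * mat (d + 1) (d + 1) (\<lambda>(i, j). Y i j) = t0 \<cdot>\<^sub>m F"
    and twisted: "F * mat_diag (d + 1) s * mat (d + 1) (d + 1) (\<lambda>(i, j). Y i j)
      = t1 \<cdot>\<^sub>m (F * mat_diag (d + 1) s) + (t0 - t1) \<cdot>\<^sub>m (F * mat_diag (d + 1) s * F)"
  obtains y \<kappa> where "\<exists>k\<le>d. y k \<noteq> 0"
    and "\<And>j. j \<le> d \<Longrightarrow> (\<Sum>i\<le>d. Y i j * y i) = t0 * y j"
    and "\<And>j. j \<le> d \<Longrightarrow> (\<Sum>i\<le>d. Y i j * (s i * y i)) = (t1 * s j + \<kappa>) * y j"
proof -
  have rows_equal: "F $$ (r, k) = F $$ (0, k)" if "r \<le> d" "k \<le> d" for r k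
    by (rule bipartite_tridiagonal_eigenmatrix_rows_equal[OF tri rows F right that])
  define y where "y k = F $$ (0, k)" for k
  define FD where "FD = F * mat_diag (d + 1) s"
  have FD: "FD = mat (d + 1) (d + 1) (\<lambda>(r, c). F $$ (r, c) * s c)"
    unfolding FD_def by (rule mat_diag_mult_right[OF F])
  have FD_carrier: "FD \<in> carrier_mat (d + 1) (d + 1)" unfolding FD by simp
  have pos: "0 < d + 1" by simp
  show ?thesis
  proof (rule that[of y "(t0 - t1) * (\<Sum>i\<le>d. s i * y i)"])
    show "\<exists>k\<le>d. y k \<noteq> 0"
    proof (rule ccontr)
      assume "\<not> (\<exists>k\<le>d. y k \<noteq> 0)"
      then have "F $$ (r, k) = 0" if "r \<le> d" "k \<le> d" for r k
        using rows_equal[OF that] that unfolding y_def by simp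
      then have "F = 0\<^sub>m (d + 1) (d + 1)" using F by (intro eq_matI) auto
      with F_nonzero show False ..
    qed
    show "(\<Sum>i\<le>d. Y i j * y i) = t0 * y j" if j: "j \<le> d" for j
    proof -
      have "(\<Sum>i\<le>d. Y i j * y i) = (F * mat (d + 1) (d + 1) (\<lambda>(i, j). Y i j)) $$ (0, j)"
        unfolding index_mult_mat_of_fun[OF F pos j] y_def by (simp add: mult.commute)
      also have "\<dots> = t0 * y j" unfolding left y_def using F j by simp
      finally show ?thesis .
    qed
    show "(\<Sum>i\<le>d. Y i j * (s i * y i)) = (t1 * s j + (t0 - t1) * (\<Sum>i\<le>d. s i * y i)) * y j"
      if j: "j \<le> d" for j
    proof -
      have "(FD * F) $$ (0, j) = (\<Sum>i<d + 1. FD $$ (0, i) * F $$ (i, j))"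
        using F FD_carrier j by (intro index_mult_mat_sum) auto
      also have "\<dots> = (\<Sum>i<d + 1. s i * y i * y j)"
      proof (rule sum.cong)
        fix i assume "i \<in> {..<d + 1}"
        then show "FD $$ (0, i) * F $$ (i, j) = s i * y i * y j"
          using rows_equal[of i j] j unfolding FD y_def by (simp add: mult.commute)
      qed simp
      finally have FDF: "(FD * F) $$ (0, j) = (\<Sum>i\<le>d. s i * y i) * y j"
        by (simp add: lessThan_Suc_atMost sum_distrib_right)
      have "(\<Sum>i\<le>d. Y i j * (s i * y i)) = (FD * mat (d + 1) (d + 1) (\<lambda>(i, j). Y i j)) $$ (0, j)"
        unfolding index_mult_mat_of_fun[OF FD_carrier pos j] unfolding FD y_def by (intro sum.cong) auto
      also have "\<dots> = t1 * FD $$ (0, j) + (t0 - t1) * (FD * F) $$ (0, j)"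
        using twisted[folded FD_def] FD_carrier F j by simp
      also have "\<dots> = (t1 * s j + (t0 - t1) * (\<Sum>i\<le>d. s i * y i)) * y j"
        unfolding FDF unfolding FD y_def using j by (simp add: algebra_simps)
      finally show ?thesis .
    qed
  qed
qed

lemma mult_free_twisted_row:
  fixes A B :: "'a::field mat"
  assumes bc: "basis_change (d + 1) P Q" and A: "A \<in> carrier_mat (d + 1) (d + 1)"
    and mf: "mult_free_with d A th E" and "1 \<le> d"
    and tri: "bipartite_tridiagonal d Y" and rows: "\<And>i. i \<le> d \<Longrightarrow> (\<Sum>j\<le>d. Y i j) = th 0"
    and cA: "basis_change.coords P Q A = mat (d + 1) (d + 1) (\<lambda>(i, j). Y i j)"
    and B: "B \<in> carrier_mat (d + 1) (d + 1)" and cB: "basis_change.coords P Q B = mat_diag (d + 1) s"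
    and adj: "Delta_adj d E B 0 1" and nonadj: "\<forall>j\<le>d. j \<noteq> 0 \<and> j \<noteq> 1 \<longrightarrow> \<not> Delta_adj d E B 0 j"
  obtains y \<kappa> where "\<exists>k\<le>d. y k \<noteq> 0"
    and "\<And>j. j \<le> d \<Longrightarrow> (\<Sum>i\<le>d. Y i j * y i) = th 0 * y j"
    and "\<And>j. j \<le> d \<Longrightarrow> (\<Sum>i\<le>d. Y i j * (s i * y i)) = (th 1 * s j + \<kappa>) * y j"
proof -
  interpret basis_change "d + 1" P Q by (rule bc)
  have E0: "E 0 \<in> carrier_mat (d + 1) (d + 1)" by (rule mult_free_E_carrier[OF A mf]) simp
  note neighbour = mult_free_single_neighbour[OF A mf B \<open>1 \<le> d\<close> adj nonadj]
  have F_nonzero: "coords (E 0) \<noteq> 0\<^sub>m (d + 1) (d + 1)"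
    using neighbour(2) coords_eq_iff[OF E0 zero_carrier_mat] coords_zero by auto
  have right: "mat (d + 1) (d + 1) (\<lambda>(i, j). Y i j) * coords (E 0) = th 0 \<cdot>\<^sub>m coords (E 0)"
    using coords_mult_eq_smult[OF A E0 E0 mult_free_A_mult_E[OF A mf le0]] cA by simp
  have left: "coords (E 0) * mat (d + 1) (d + 1) (\<lambda>(i, j). Y i j) = th 0 \<cdot>\<^sub>m coords (E 0)"
    using coords_mult_eq_smult[OF E0 A E0 mult_free_E_mult_A[OF A mf le0]] cA by simp
  have twisted: "coords (E 0) * mat_diag (d + 1) s * mat (d + 1) (d + 1) (\<lambda>(i, j). Y i j)
      = th 1 \<cdot>\<^sub>m (coords (E 0) * mat_diag (d + 1) s)
        + (th 0 - th 1) \<cdot>\<^sub>m (coords (E 0) * mat_diag (d + 1) s * coords (E 0))"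
    using coords_sandwich_eq[OF E0 B A neighbour(1)] cA cB by simp
  show ?thesis
    by (rule eigenprojection_twisted_row[OF tri rows coords_carrier[OF E0] F_nonzero right left twisted that])
qed

theorem lemma7p7:
  fixes d :: nat and Es E :: "nat \<Rightarrow> 'a::field mat" and A :: "'a mat"
    and th ths :: "nat \<Rightarrow> 'a"
  assumes "d \<ge> 3"
    and "orth_idem_system d Es"
    and "A \<in> carrier_mat (d+1) (d+1)"
    and "\<forall>i\<le>d. \<forall>j\<le>d. (i > j + 1 \<or> j > i + 1) \<longrightarrow> Es i * A * Es j = 0\<^sub>m (d+1) (d+1)"
    and "\<forall>i\<le>d. \<forall>j\<le>d. (i = j + 1 \<or> j = i + 1) \<longrightarrow> Es i * A * Es j \<noteq> 0\<^sub>m (d+1) (d+1)"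
    and "mult_free_with d A th E"
    and "bipartite_wrt d Es A"
    and "inj_on ths {0..d}"
    and "normalizing d Es A (th 0)"
    and "Delta_adj d E (msum (d+1) (\<lambda>i. ths i \<cdot>\<^sub>m Es i) {0..d}) 0 1"
    and "\<forall>j\<le>d. j \<noteq> 0 \<and> j \<noteq> 1 \<longrightarrow>
           \<not> Delta_adj d E (msum (d+1) (\<lambda>i. ths i \<cdot>\<^sub>m Es i) {0..d}) 0 j"
  shows "\<forall>i. 1 \<le> i \<and> i \<le> d - 1 \<longrightarrow>
           th 0 * ((ths (i-1) - ths 1) / (ths i - ths 0)) \<noteq> th 1 \<and>
           th 0 * ((ths (i+1) - ths 1) / (ths i - ths 0)) \<noteq> th 1"
proof -
  define As where "As = msum (d + 1) (\<lambda>i. ths i \<cdot>\<^sub>m Es i) {0..d}"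
  have Es: "Es i \<in> carrier_mat (d + 1) (d + 1)" if "i \<le> d" for i
    using assms(2) that unfolding orth_idem_system_def by blast
  obtain P Q Y where bc: "basis_change (d + 1) P Q"
    and cA: "basis_change.coords P Q A = mat (d + 1) (d + 1) (\<lambda>(i, j). Y i j)"
    and cEs: "\<And>i. i \<le> d \<Longrightarrow> basis_change.coords P Q (Es i) = coord_proj (d + 1) i"
    and rows: "\<And>i. i \<le> d \<Longrightarrow> (\<Sum>j\<le>d. Y i j) = th 0"
    using normalizing_basis_change[OF assms(2,3,9)] by blast
  have tri: "bipartite_tridiagonal d Y"
    by (rule coords_bipartite_tridiagonal[OF bc refl assms(3) Es cA cEs assms(4,5,7)])
  have cAs: "basis_change.coords P Q As = mat_diag (d + 1) ths"
    unfolding As_def by (rule basis_change.coords_msum_coord_proj[OF bc refl Es cEs])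
  obtain y \<kappa> where nonzero: "\<exists>k\<le>d. y k \<noteq> 0"
    and eig: "\<And>j. j \<le> d \<Longrightarrow> (\<Sum>i\<le>d. Y i j * y i) = th 0 * y j"
    and twisted: "\<And>j. j \<le> d \<Longrightarrow> (\<Sum>i\<le>d. Y i j * (ths i * y i)) = (th 1 * ths j + \<kappa>) * y j"
    using assms(1) msum_carrier[of "d + 1" "\<lambda>i. ths i \<cdot>\<^sub>m Es i" "{0..d}"]
    by (intro mult_free_twisted_row[OF bc assms(3,6) _ tri rows cA _ cAs assms(10,11)[folded As_def] that])
      (simp_all add: As_def)
  show ?thesis
    by (rule twisted_eigenvector_ratio_ne[OF bipartite_tridiagonal_transpose[OF tri] eig twisted
        assms(8) nonzero])
qed

end
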